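(* Let $\mathcal{J}\subset\mathbb{R}$ be a compact interval, $V\subset\mathbb{R}^d$ a bounded open set, $\Lambda$ a finite set, and for each $i\in\Lambda$ let $f_i:\overline V\times\mathcal J\to V$ be real-analytic on a neighborhood of $\overline V\times\mathcal J$, with $f_{i,t}=f_i(\cdot,t)$ and $\mathcal F_t=\{f_{i,t}\}_{i\in\Lambda}$. Assume there exist $C>0$, $0<\gamma<1$ with $\|f'_{\mathbf i,t}(x)\|\le C\gamma^n$ for all $\mathbf i\in\Lambda^n$, $x\in\overline V$, $t\in\mathcal J$. If $\{\mathcal F_t\}_{t\in\mathcal J}$ is transverse of order $k\ge1$ on $\mathcal J$, then the set $E$ has Hausdorff dimension zero.
   Context: For $\mathbf i=i_1\ldots i_n$, $f_{\mathbf i,t}=f_{i_1,t}\circ\cdots\circ f_{i_n,t}$. Fix $x_0\in V$; $F_{\mathbf i}(t)=f_{\mathbf i,t}(x_0)$ for finite words and $\Delta_{\mathbf i,\mathbf j}=F_{\mathbf i}-F_{\mathbf j}$. Transverse of order $k$: there exists $c>0$ such that for all $n$ and $\mathbf i,\mathbf j\in\Lambda^n$ with $i_1\ne j_1$, for every $t\in\mathcal J$ there is $p\in\{0,\ldots,k\}$ with $\|\Delta^{(p)}_{\mathbf i,\mathbf j}(t)\|>c$. $E=\bigcap_{\varepsilon>0}\bigcap_{N\ge1}\bigcup_{n>N}\bigcup_{\mathbf i,\mathbf j\in\Lambda^n,\,i_1\ne j_1}\Delta_{\mathbf i,\mathbf j}^{-1}(B_{\varepsilon^n})$, with $B_r=\{x\in\mathbb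 R^d:\|x\|\le r\}$. *)

theory Defs
  imports "HOL-Analysis.Analysis"
begin

definition real_analytic_xt_on ::
  "(real^'d \<Rightarrow> real \<Rightarrow> real^'e) \<Rightarrow> ((real^'d) \<times> real) set \<Rightarrow> bool" where
  "real_analytic_xt_on g U \<longleftrightarrow>
     (\<forall>(x0, t0) \<in> U. \<exists>r>0. \<exists>c :: ('d \<Rightarrow> nat) \<Rightarrow> nat \<Rightarrow> real^'e.
        \<forall>x t. dist (x, t) (x0, t0) < r \<longrightarrow>
          ((\<lambda>(\<alpha>, m). ((\<Prod>i\<in>UNIV. (x$i - x0$i) ^ \<alpha> i) * (t - t0) ^ m) *\<^sub>R c \<alpha> m)
              has_sum g x t) UNIV \<and>
          (\<lambda>(\<alpha>, m). norm (((\<Prod>i\<in>UNIV. (x$i - x0$i) ^ \<alpha> i) * (t - t0) ^ m) *\<^sub>R c \<alpha> m))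
              summable_on UNIV)"

fun comp_word :: "('i \<Rightarrow> 'v \<Rightarrow> real \<Rightarrow> 'v) \<Rightarrow> 'i list \<Rightarrow> real \<Rightarrow> 'v \<Rightarrow> 'v" where
  "comp_word f [] t = id"
| "comp_word f (i # is) t = (\<lambda>x. f i x t) \<circ> comp_word f is t"

fun vderiv_n :: "nat \<Rightarrow> (real \<Rightarrow> 'a::real_normed_vector) \<Rightarrow> real \<Rightarrow> 'a" where
  "vderiv_n 0 g = g"
| "vderiv_n (Suc p) g = (\<lambda>t. vector_derivative (vderiv_n p g) (at t))"

definition hausdorff_pre :: "real \<Rightarrow> real \<Rightarrow> 'a::metric_space set \<Rightarrow> ennreal" where
  "hausdorff_pre s \<delta> A =
     (INF U \<in> {U :: nat \<Rightarrow> 'a set. A \<subseteq> (\<Union>k. U k) \<and> (\<forall>k. bounded (U k) \<and> diameter (U k) \<le> \<delta>)}.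
        (\<Sum>k. ennreal (diameter (U k) powr s)))"

definition hausdorff_outer :: "real \<Rightarrow> 'a::metric_space set \<Rightarrow> ennreal" where
  "hausdorff_outer s A = (SUP \<delta> \<in> {0<..}. hausdorff_pre s \<delta> A)"

definition hausdorff_dim :: "'a::metric_space set \<Rightarrow> ereal" where
  "hausdorff_dim A = (INF s \<in> {s::real. 0 \<le> s \<and> hausdorff_outer s A = 0}. ereal s)"

definition Delta :: "('i \<Rightarrow> 'v \<Rightarrow> real \<Rightarrow> 'v::real_normed_vector) \<Rightarrow> 'v \<Rightarrow> 'i list \<Rightarrow> 'i list \<Rightarrow> real \<Rightarrow> 'v" where
  "Delta f x0 is js t = comp_word f is t x0 - comp_word f js t x0"

definition transverse_of_order ::
  "('i \<Rightarrow> 'v \<Rightarrow> real \<Rightarrow> 'v::real_normed_vector) \<Rightarrow> 'i set \<Rightarrow> 'v \<Rightarrow> real set \<Rightarrow> nat \<Rightarrow> bool" where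
  "transverse_of_order f Lam x0 J k \<longleftrightarrow>
     (\<exists>c>0. \<forall>n. \<forall>is js. is \<in> lists Lam \<and> js \<in> lists Lam \<and> length is = n \<and> length js = n
        \<and> hd is \<noteq> hd js \<longrightarrow>
        (\<forall>t\<in>J. \<exists>p\<le>k. norm (vderiv_n p (Delta f x0 is js) t) > c))"

definition exc_set ::
  "('i \<Rightarrow> 'v \<Rightarrow> real \<Rightarrow> 'v::real_normed_vector) \<Rightarrow> 'i set \<Rightarrow> 'v \<Rightarrow> real set \<Rightarrow> real set" where
  "exc_set f Lam x0 J =
     (\<Inter>\<epsilon>\<in>{0<..}. \<Inter>N\<in>{1..}. \<Union>n\<in>{N<..}.
        \<Union>(is, js) \<in> {(is, js). is \<in> lists Lam \<and> js \<in> lists Lam \<and> length is = n \<and> length js = n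
                              \<and> hd is \<noteq> hd js}.
          {t\<in>J. norm (Delta f x0 is js t) \<le> \<epsilon> ^ n})"

end

(* For a word w, the derivatives of order at most k+1 of t -> f_{w,t}(x0) grow at most like
   R^((k+1)|w|): real-analyticity gives uniform bounds on all partial derivatives of the maps
   f_i near closure V x J, and the Faa di Bruno formula propagates them along the composition,
   each letter multiplying the bound by R. For a pair of words of length n with different first
   letters, transversality provides at every t a derivative of order at most k of Delta of size
   larger than c, so a sublevel set estimate of van der Corput type covers
   {t in J. |Delta(t)| <= eps^n} by O(R^((k+1)n)) intervals of length O(eps^(n/k)).
   With eps = tau^k and at most |Lambda|^(2n) pairs, the level n sets in the definition of E are
   covered by O((|Lambda|^2 R^(k+1))^n) sets of diameter O(tau^n). For every s > 0 their
   s-dimensional content is summable once tau is small, and E is covered by the tails of these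
   covers, so the s-dimensional Hausdorff measure of E vanishes. *)

theory Submission
  imports Defs
begin

section \<open>Higher derivatives on the real line\<close>

definition has_vderivs_on :: "nat \<Rightarrow> (real \<Rightarrow> 'a::real_normed_vector) \<Rightarrow> real set \<Rightarrow> bool" where
  "has_vderivs_on K F T \<longleftrightarrow>
     (\<forall>q\<le>K. \<forall>t\<in>T. (vderiv_n q F has_vector_derivative vderiv_n (Suc q) F t) (at t))"

lemma has_vderivs_onD:
  "has_vderivs_on K F T \<Longrightarrow> q \<le> K \<Longrightarrow> t \<in> T \<Longrightarrow>
     (vderiv_n q F has_vector_derivative vderiv_n (Suc q) F t) (at t)"
  by (simp add: has_vderivs_on_def)

lemma has_vderivs_on_subset: "has_vderivs_on K F T \<Longrightarrow> S \<subseteq> T \<Longrightarrow> has_vderivs_on K F S"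
  by (auto simp: has_vderivs_on_def)

lemma vderiv_n_eq_on_open:
  fixes h :: "real \<Rightarrow> 'a::real_normed_vector"
  assumes T: "open T" and h: "\<And>t. t \<in> T \<Longrightarrow> h t = S 0 t"
    and S: "\<And>p t. p \<le> K \<Longrightarrow> t \<in> T \<Longrightarrow> (S p has_vector_derivative S (Suc p) t) (at t)"
  shows "\<And>p t. p \<le> Suc K \<Longrightarrow> t \<in> T \<Longrightarrow> vderiv_n p h t = S p t"
    and "has_vderivs_on K h T"
proof -
  have eq: "\<forall>t\<in>T. vderiv_n p h t = S p t" if "p \<le> Suc K" for p
    using that
  proof (induction p)
    case 0
    then show ?case using h by simp
  next
    case (Suc p)
    have "(vderiv_n p h has_vector_derivative S (Suc p) t) (at t)" if "t \<in> T" for t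
      by (rule has_vector_derivative_transform_within_open[OF S T that]) (use Suc that in auto)
    then show ?case by (simp add: vector_derivative_at)
  qed
  then show "\<And>p t. p \<le> Suc K \<Longrightarrow> t \<in> T \<Longrightarrow> vderiv_n p h t = S p t" by blast
  show "has_vderivs_on K h T"
    unfolding has_vderivs_on_def
  proof (intro allI impI ballI)
    fix p t assume p: "p \<le> K" and t: "t \<in> T"
    have "(vderiv_n p h has_vector_derivative S (Suc p) t) (at t)"
      by (rule has_vector_derivative_transform_within_open[OF S[OF p t] T t]) (use eq p in auto)
    then show "(vderiv_n p h has_vector_derivative vderiv_n (Suc p) h t) (at t)"
      using eq[of "Suc p"] p t by simp
  qed
qed

lemma vderiv_n_diff:
  fixes F G :: "real \<Rightarrow> 'a::real_normed_vector"
  assumes T: "open T" and F: "has_vderivs_on K F T" and G: "has_vderivs_on K G T"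
  shows "\<And>p t. p \<le> Suc K \<Longrightarrow> t \<in> T \<Longrightarrow> vderiv_n p (\<lambda>t. F t - G t) t = vderiv_n p F t - vderiv_n p G t"
    and "has_vderivs_on K (\<lambda>t. F t - G t) T"
proof -
  have "((\<lambda>t. vderiv_n p F t - vderiv_n p G t) has_vector_derivative
      vderiv_n (Suc p) F t - vderiv_n (Suc p) G t) (at t)" if "p \<le> K" "t \<in> T" for p t
    using has_vderivs_onD[OF F that] has_vderivs_onD[OF G that] by (rule has_vector_derivative_diff)
  note eq = vderiv_n_eq_on_open[OF T, where h = "\<lambda>t. F t - G t"
      and S = "\<lambda>p t. vderiv_n p F t - vderiv_n p G t", OF _ this]
  show "\<And>p t. p \<le> Suc K \<Longrightarrow> t \<in> T \<Longrightarrow> vderiv_n p (\<lambda>t. F t - G t) t = vderiv_n p F t - vderiv_n p G t"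
    and "has_vderivs_on K (\<lambda>t. F t - G t) T"
    using eq by simp_all
qed

lemma norm_diff_le_vector_derivative_bound:
  fixes F :: "real \<Rightarrow> 'a::real_normed_vector"
  assumes S: "convex S" and F': "\<And>x. x \<in> S \<Longrightarrow> (F has_vector_derivative F' x) (at x)"
    and L: "\<And>x. x \<in> S \<Longrightarrow> norm (F' x) \<le> L" and s: "s \<in> S" and t: "t \<in> S"
  shows "norm (F t - F s) \<le> L * \<bar>t - s\<bar>"
proof -
  have "norm (F t - F s) \<le> L * norm (t - s)"
  proof (rule differentiable_bound[OF S _ _ t s])
    show "(F has_derivative (\<lambda>h. h *\<^sub>R F' x)) (at x within S)" if "x \<in> S" for x
      using F'[OF that] by (simp add: has_vector_derivative_def has_derivative_at_withinI)
    show "onorm (\<lambda>h. h *\<^sub>R F' x) \<le> L" if "x \<in> S" for x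
      using L[OF that] onorm_scaleR_left[OF bounded_linear_ident, of "F' x"] by (simp add: onorm_id)
  qed
  then show ?thesis by simp
qed

lemma DERIV_ge_imp_diff_ge:
  fixes h h' :: "real \<Rightarrow> real"
  assumes I: "is_interval I" and h: "\<And>t. t \<in> I \<Longrightarrow> (h has_real_derivative h' t) (at t)"
    and c: "\<And>t. t \<in> I \<Longrightarrow> c \<le> h' t" and s: "s \<in> I" and t: "t \<in> I" and st: "s \<le> t"
  shows "c * (t - s) \<le> h t - h s"
proof (cases "s = t")
  case False
  then have "s < t" using st by simp
  have sub: "x \<in> I" if "s \<le> x" "x \<le> t" for x
    using I s t that unfolding is_interval_1 by blast
  obtain z where z: "s < z" "z < t" "h t - h s = (t - s) * h' z"
    using MVT2[OF \<open>s < t\<close>, of h h'] h sub by blast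
  then show ?thesis using c[of z] sub[of z] st by (simp add: mult.commute mult_left_mono)
qed simp

lemma is_interval_superlevel:
  fixes g :: "real \<Rightarrow> real"
  assumes "is_interval I" "mono_on I g"
  shows "is_interval {t\<in>I. \<beta> \<le> g t}"
  using assms unfolding is_interval_1 mono_on_def by (blast intro: order_trans)

lemma is_interval_sublevel:
  fixes g :: "real \<Rightarrow> real"
  assumes "is_interval I" "mono_on I g"
  shows "is_interval {t\<in>I. g t \<le> \<beta>}"
  using assms unfolding is_interval_1 mono_on_def by (blast intro: order_trans)

lemma bounded_diameter_le_real:
  fixes S :: "real set"
  assumes "0 \<le> d" and "\<And>x y. x \<in> S \<Longrightarrow> y \<in> S \<Longrightarrow> y \<le> x \<Longrightarrow> x - y \<le> d"
  shows "bounded S \<and> diameter S \<le> d"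
proof
  have dist: "dist x y \<le> d" if "x \<in> S" "y \<in> S" for x y
    using assms(2)[OF that] assms(2)[OF that(2,1)] by (cases "y \<le> x") (auto simp: dist_real_def)
  then show "diameter S \<le> d" using assms(1) by (intro diameter_le) (auto simp: dist_norm)
  show "bounded S" unfolding bounded_def using dist by (cases "S = {}") (auto, blast)
qed

section \<open>Sublevel sets of functions with a large derivative\<close>

definition diam_cover :: "'a::metric_space set \<Rightarrow> real \<Rightarrow> real \<Rightarrow> bool" where
  "diam_cover S m r \<longleftrightarrow>
     (\<exists>\<C>. finite \<C> \<and> real (card \<C>) \<le> m \<and> (\<forall>A\<in>\<C>. bounded A \<and> diameter A \<le> r) \<and> S \<subseteq> \<Union>\<C>)"

lemma diam_cover_mono:
  assumes "diam_cover S m r" "T \<subseteq> S" "m \<le> m'" "r \<le> r'"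
  shows "diam_cover T m' r'"
  using assms unfolding diam_cover_def by (meson order_trans subset_trans)

lemma diam_cover_empty: "diam_cover {} 0 r"
  unfolding diam_cover_def by (intro exI[of _ "{}"]) simp

lemma diam_cover_singleton: "bounded S \<Longrightarrow> diameter S \<le> r \<Longrightarrow> diam_cover S 1 r"
  unfolding diam_cover_def by (intro exI[of _ "{S}"]) simp

lemma diam_cover_Un:
  assumes "diam_cover S m r" "diam_cover T m' r"
  shows "diam_cover (S \<union> T) (m + m') r"
proof -
  obtain \<C> \<C>' where "finite \<C>" "real (card \<C>) \<le> m" "\<forall>A\<in>\<C>. bounded A \<and> diameter A \<le> r" "S \<subseteq> \<Union>\<C>"
    and "finite \<C>'" "real (card \<C>') \<le> m'" "\<forall>A\<in>\<C>'. bounded A \<and> diameter A \<le> r" "T \<subseteq> \<Union>\<C>'"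
    using assms unfolding diam_cover_def by blast
  moreover have "real (card (\<C> \<union> \<C>')) \<le> real (card \<C>) + real (card \<C>')"
    using card_Un_le[of \<C> \<C>'] by linarith
  ultimately show ?thesis
    unfolding diam_cover_def by (intro exI[of _ "\<C> \<union> \<C>'"]) auto
qed

lemma diam_cover_UN:
  assumes "finite I" "\<And>i. i \<in> I \<Longrightarrow> diam_cover (S i) m r"
  shows "diam_cover (\<Union>i\<in>I. S i) (real (card I) * m) r"
  using assms
proof (induction I rule: finite_induct)
  case empty
  then show ?case using diam_cover_empty by simp
next
  case (insert i I)
  then have "diam_cover (S i \<union> (\<Union>i\<in>I. S i)) (m + real (card I) * m) r"
    by (intro diam_cover_Un) auto
  then show ?case using insert by (simp add: algebra_simps)
qed

lemma diam_cover_sublevel_of_deriv_ge: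
  fixes g g' :: "real \<Rightarrow> real"
  assumes I: "is_interval I" and c: "0 < c" and \<delta>: "0 \<le> \<delta>"
    and g: "\<And>t. t \<in> I \<Longrightarrow> (g has_real_derivative g' t) (at t)"
    and g': "\<And>t. t \<in> I \<Longrightarrow> c \<le> g' t"
  shows "diam_cover {t\<in>I. \<bar>g t\<bar> \<le> \<delta>} 1 (2 * \<delta> / c)"
proof -
  have "x - y \<le> 2 * \<delta> / c" if "x \<in> {t\<in>I. \<bar>g t\<bar> \<le> \<delta>}" "y \<in> {t\<in>I. \<bar>g t\<bar> \<le> \<delta>}" "y \<le> x" for x y
  proof -
    have "c * (x - y) \<le> g x - g y" using DERIV_ge_imp_diff_ge[OF I g g'] that by auto
    also have "\<dots> \<le> 2 * \<delta>" using that by auto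
    finally show ?thesis using c by (simp add: field_simps)
  qed
  then have "bounded {t\<in>I. \<bar>g t\<bar> \<le> \<delta>} \<and> diameter {t\<in>I. \<bar>g t\<bar> \<le> \<delta>} \<le> 2 * \<delta> / c"
    using c \<delta> by (intro bounded_diameter_le_real) auto
  then show ?thesis by (intro diam_cover_singleton) auto
qed

lemma powr_div_powr_Suc:
  fixes x :: real
  assumes "0 < x" "0 < n"
  shows "(x / x powr (1 / real (Suc n))) powr (1 / real n) = x powr (1 / real (Suc n))"
proof -
  have "x / x powr (1 / real (Suc n)) = x powr (1 - 1 / real (Suc n))"
    using assms by (simp add: powr_diff)
  also have "1 - 1 / real (Suc n) = real n * (1 / real (Suc n))"
    by (simp add: field_simps)
  finally show ?thesis using assms by (simp add: powr_powr)
qed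

text \<open>A sublevel set estimate of van der Corput type. In the induction step, the set where
  \<open>\<bar>G (m+1)\<bar> \<le> \<beta>\<close> is a single short interval, since G (m+1) grows at rate c; on the two
  intervals where \<open>\<bar>G (m+1)\<bar> \<ge> \<beta>\<close> the induction hypothesis applies with c replaced by \<beta>.
  The choice of \<beta> balances the two diameters.\<close>
lemma diam_cover_sublevel_of_higher_deriv_ge:
  fixes G :: "nat \<Rightarrow> real \<Rightarrow> real"
  assumes "is_interval I" "0 < c" "0 < \<delta>"
    and "\<And>q t. q \<le> m \<Longrightarrow> t \<in> I \<Longrightarrow> (G q has_real_derivative G (Suc q) t) (at t)"
    and "\<And>t. t \<in> I \<Longrightarrow> c \<le> G (Suc m) t"
  shows "diam_cover {t\<in>I. \<bar>G 0 t\<bar> \<le> \<delta>} (3 ^ m) (2 * (\<delta> / c) powr (1 / real (Suc m)))"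
  using assms
proof (induction m arbitrary: G c I)
  case 0
  then have "diam_cover {t\<in>I. \<bar>G 0 t\<bar> \<le> \<delta>} 1 (2 * \<delta> / c)"
    by (intro diam_cover_sublevel_of_deriv_ge) auto
  then show ?case using 0 by simp
next
  case (Suc m)
  define \<beta> where "\<beta> = c * (\<delta> / c) powr (1 / real (Suc (Suc m)))"
  have \<beta>: "0 < \<beta>" using Suc.prems by (simp add: \<beta>_def)
  have radius: "(\<delta> / \<beta>) powr (1 / real (Suc m)) = (\<delta> / c) powr (1 / real (Suc (Suc m)))"
    using powr_div_powr_Suc[of "\<delta> / c" "Suc m"] Suc.prems by (simp add: \<beta>_def)
  have mono: "mono_on I (G (Suc m))"
  proof (rule mono_onI)
    fix s t assume "s \<in> I" "t \<in> I" "s \<le> t"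
    with Suc.prems have "c * (t - s) \<le> G (Suc m) t - G (Suc m) s"
      by (intro DERIV_ge_imp_diff_ge[where h' = "G (Suc (Suc m))"]) auto
    moreover have "0 \<le> c * (t - s)" using Suc.prems(2) \<open>s \<le> t\<close> by simp
    ultimately show "G (Suc m) s \<le> G (Suc m) t" by linarith
  qed
  define IR where "IR = {t\<in>I. \<beta> \<le> G (Suc m) t}"
  define IL where "IL = {t\<in>I. G (Suc m) t \<le> - \<beta>}"
  have small: "diam_cover {t\<in>I. \<bar>G (Suc m) t\<bar> \<le> \<beta>} 1 (2 * (\<delta> / c) powr (1 / real (Suc (Suc m))))"
    using diam_cover_sublevel_of_deriv_ge[of I c \<beta> "G (Suc m)" "G (Suc (Suc m))"] Suc.prems \<beta>
    by (simp add: \<beta>_def)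
  have right: "diam_cover {t\<in>IR. \<bar>G 0 t\<bar> \<le> \<delta>} (3 ^ m) (2 * (\<delta> / c) powr (1 / real (Suc (Suc m))))"
  proof -
    have "diam_cover {t\<in>IR. \<bar>G 0 t\<bar> \<le> \<delta>} (3 ^ m) (2 * (\<delta> / \<beta>) powr (1 / real (Suc m)))"
    proof (rule Suc.IH)
      show "is_interval IR" unfolding IR_def by (rule is_interval_superlevel[OF Suc.prems(1) mono])
      show "(G q has_real_derivative G (Suc q) t) (at t)" if "q \<le> m" "t \<in> IR" for q t
        using Suc.prems(4) that by (simp add: IR_def)
    qed (use \<beta> Suc.prems(3) IR_def in auto)
    then show ?thesis by (simp only: radius)
  qed
  have left: "diam_cover {t\<in>IL. \<bar>- G 0 t\<bar> \<le> \<delta>} (3 ^ m) (2 * (\<delta> / c) powr (1 / real (Suc (Suc m))))"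
  proof -
    have "diam_cover {t\<in>IL. \<bar>- G 0 t\<bar> \<le> \<delta>} (3 ^ m) (2 * (\<delta> / \<beta>) powr (1 / real (Suc m)))"
    proof (rule Suc.IH[where G = "\<lambda>q t. - G q t"])
      show "is_interval IL" unfolding IL_def by (rule is_interval_sublevel[OF Suc.prems(1) mono])
      show "((\<lambda>t. - G q t) has_real_derivative - G (Suc q) t) (at t)" if "q \<le> m" "t \<in> IL" for q t
        using Suc.prems(4) that by (intro DERIV_minus) (simp add: IL_def)
    qed (use \<beta> Suc.prems(3) IL_def in auto)
    then show ?thesis by (simp only: radius)
  qed
  have "{t\<in>I. \<bar>G 0 t\<bar> \<le> \<delta>} \<subseteq> {t\<in>I. \<bar>G (Suc m) t\<bar> \<le> \<beta>} \<union> {t\<in>IR. \<bar>G 0 t\<bar> \<le> \<delta>} \<union> {t\<in>IL. \<bar>- G 0 t\<bar> \<le> \<delta>}"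
    by (auto simp: IR_def IL_def)
  moreover have "1 + 3 ^ m + 3 ^ m \<le> (3::real) ^ Suc m" by simp
  ultimately show ?case
    using diam_cover_mono[OF diam_cover_Un[OF diam_cover_Un[OF small right] left]] by blast
qed

text \<open>Near a point where the p-th derivative of \<Delta> has norm larger than c, the sublevel
  estimate applies to the real function \<langle>u, \<Delta>\<rangle>, u the unit vector in that direction.\<close>
lemma diam_cover_sublevel_near_point:
  fixes \<Delta> :: "real \<Rightarrow> 'a::real_inner"
  assumes I: "is_interval I" and D: "has_vderivs_on k \<Delta> I"
    and p: "p \<le> k" "c < norm (vderiv_n p \<Delta> t0)"
    and near: "\<And>t. t \<in> I \<Longrightarrow> norm (vderiv_n p \<Delta> t - vderiv_n p \<Delta> t0) \<le> c / 2"
    and c: "0 < c" and \<delta>: "0 < \<delta>" "\<delta> \<le> c / 2"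
  shows "diam_cover {t\<in>I. norm (\<Delta> t) \<le> \<delta>} (3 ^ k) (2 * (2 * \<delta> / c) powr (1 / real k))"
proof (cases p)
  case 0
  have "{t\<in>I. norm (\<Delta> t) \<le> \<delta>} = {}"
  proof (safe)
    fix t assume t: "t \<in> I" and "norm (\<Delta> t) \<le> \<delta>"
    moreover have "norm (\<Delta> t0) \<le> norm (\<Delta> t) + norm (\<Delta> t - \<Delta> t0)"
      by (metis norm_triangle_sub add.commute norm_minus_commute)
    ultimately show "t \<in> {}" using near[OF t] p \<delta> 0 by simp
  qed
  then show ?thesis by (metis diam_cover_empty diam_cover_mono order_refl zero_le_numeral zero_le_power)
next
  case (Suc m)
  define v where "v = vderiv_n p \<Delta> t0"
  define u where "u = v /\<^sub>R norm v"
  have v: "c < norm v" using p by (simp add: v_def)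
  then have "norm v \<noteq> 0" using c by linarith
  then have u: "norm u = 1" "u \<bullet> v = norm v"
    by (simp_all add: u_def power2_norm_eq_inner[symmetric] power2_eq_square)
  have G: "((\<lambda>t. u \<bullet> vderiv_n q \<Delta> t) has_real_derivative u \<bullet> vderiv_n (Suc q) \<Delta> t) (at t)"
    if "q \<le> m" "t \<in> I" for q t
    using bounded_linear.has_vector_derivative[OF bounded_linear_inner_right has_vderivs_onD[OF D]]
      that p Suc by (simp add: has_real_derivative_iff_has_vector_derivative)
  have G_large: "c / 2 \<le> u \<bullet> vderiv_n (Suc m) \<Delta> t" if t: "t \<in> I" for t
  proof -
    have "u \<bullet> vderiv_n (Suc m) \<Delta> t = u \<bullet> v + u \<bullet> (vderiv_n p \<Delta> t - vderiv_n p \<Delta> t0)"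
      by (simp add: Suc v_def inner_diff_right)
    moreover have "\<bar>u \<bullet> (vderiv_n p \<Delta> t - vderiv_n p \<Delta> t0)\<bar> \<le> c / 2"
      using Cauchy_Schwarz_ineq2[of u] u near[OF t] by (metis mult_1 order_trans)
    ultimately show ?thesis using u v by linarith
  qed
  have cover: "diam_cover {t\<in>I. \<bar>u \<bullet> \<Delta> t\<bar> \<le> \<delta>} (3 ^ m) (2 * (\<delta> / (c / 2)) powr (1 / real (Suc m)))"
    using diam_cover_sublevel_of_higher_deriv_ge[of I "c / 2" \<delta> m "\<lambda>q t. u \<bullet> vderiv_n q \<Delta> t"]
      I c \<delta> G G_large by simp
  have "{t\<in>I. norm (\<Delta> t) \<le> \<delta>} \<subseteq> {t\<in>I. \<bar>u \<bullet> \<Delta> t\<bar> \<le> \<delta>}"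
    using Cauchy_Schwarz_ineq2[of u] u by (auto intro: order_trans)
  moreover have "(3::real) ^ m \<le> 3 ^ k" using p Suc by (intro power_increasing) auto
  moreover have "(2 * \<delta> / c) powr (1 / real (Suc m)) \<le> (2 * \<delta> / c) powr (1 / real k)"
    using p Suc c \<delta> by (intro powr_mono') (auto simp: divide_le_eq frac_le)
  ultimately show ?thesis
    by (intro diam_cover_mono[OF cover]) (auto simp: field_simps)
qed

lemma cover_interval_by_short_intervals:
  fixes a b r :: real
  assumes ab: "a \<le> b" and r: "0 < r"
  obtains N I where "real N \<le> (b - a) / r + 1" "{a..b} \<subseteq> (\<Union>j<N. I j)"
    "\<And>j. j < N \<Longrightarrow> is_interval (I j) \<and> I j \<subseteq> {a..b}"
    "\<And>j. j < N \<Longrightarrow> \<exists>t0\<in>I j. \<forall>t\<in>I j. \<bar>t - t0\<bar> \<le> r"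
proof
  define N where "N = nat \<lfloor>(b - a) / r\<rfloor> + 1"
  define I where "I j = {a + real j * r .. min b (a + real (Suc j) * r)}" for j :: nat
  show "real N \<le> (b - a) / r + 1" using ab r by (simp add: N_def of_nat_floor)
  show "{a..b} \<subseteq> (\<Union>j<N. I j)"
  proof
    fix t assume t: "t \<in> {a..b}"
    define j where "j = nat \<lfloor>(t - a) / r\<rfloor>"
    have "\<lfloor>(t - a) / r\<rfloor> \<le> \<lfloor>(b - a) / r\<rfloor>"
      using t r by (intro floor_mono divide_right_mono) auto
    then have "j < N" by (simp add: j_def N_def)
    moreover have "real j \<le> (t - a) / r" "(t - a) / r < real j + 1"
      using t r by (simp_all add: j_def)
    then have "t \<in> I j" using t r by (simp add: I_def field_simps)
    ultimately show "t \<in> (\<Union>j<N. I j)" by blast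
  qed
  fix j assume j: "j < N"
  have "real j \<le> real (nat \<lfloor>(b - a) / r\<rfloor>)" using j by (simp add: N_def)
  also have "\<dots> \<le> (b - a) / r" using ab r by (intro of_nat_floor) simp
  finally have "a + real j * r \<in> I j" using r by (simp add: I_def field_simps)
  moreover have "\<bar>t - (a + real j * r)\<bar> \<le> r" if "t \<in> I j" for t
    using that by (auto simp: I_def algebra_simps)
  ultimately show "\<exists>t0\<in>I j. \<forall>t\<in>I j. \<bar>t - t0\<bar> \<le> r" by blast
  show "is_interval (I j) \<and> I j \<subseteq> {a..b}" using r by (auto simp: I_def is_interval_cc)
qed

lemma diam_cover_sublevel_of_transverse:
  fixes \<Delta> :: "real \<Rightarrow> 'a::real_inner"
  assumes ab: "a \<le> b" and D: "has_vderivs_on k \<Delta> {a..b}"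
    and L: "0 < L" "\<And>p t. 1 \<le> p \<Longrightarrow> p \<le> Suc k \<Longrightarrow> t \<in> {a..b} \<Longrightarrow> norm (vderiv_n p \<Delta> t) \<le> L"
    and c: "0 < c" and transverse: "\<And>t. t \<in> {a..b} \<Longrightarrow> \<exists>p\<le>k. c < norm (vderiv_n p \<Delta> t)"
    and \<delta>: "0 < \<delta>" "\<delta> \<le> c / 2"
  shows "diam_cover {t\<in>{a..b}. norm (\<Delta> t) \<le> \<delta>}
           (((b - a) * 2 * L / c + 1) * 3 ^ k) (2 * (2 * \<delta> / c) powr (1 / real k))"
proof -
  have r: "0 < c / (2 * L)" using c L by simp
  obtain N I where N: "real N \<le> (b - a) / (c / (2 * L)) + 1" and cover: "{a..b} \<subseteq> (\<Union>j<N. I j)"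
    and I: "\<And>j. j < N \<Longrightarrow> is_interval (I j) \<and> I j \<subseteq> {a..b}"
    and short: "\<And>j. j < N \<Longrightarrow> \<exists>t0\<in>I j. \<forall>t\<in>I j. \<bar>t - t0\<bar> \<le> c / (2 * L)"
    using cover_interval_by_short_intervals[OF ab r] by blast
  have "diam_cover {t\<in>I j. norm (\<Delta> t) \<le> \<delta>} (3 ^ k) (2 * (2 * \<delta> / c) powr (1 / real k))"
    if j: "j < N" for j
  proof -
    obtain t0 where t0: "t0 \<in> I j" and near: "\<And>t. t \<in> I j \<Longrightarrow> \<bar>t - t0\<bar> \<le> c / (2 * L)"
      using short[OF j] by blast
    obtain p where p: "p \<le> k" "c < norm (vderiv_n p \<Delta> t0)" using transverse t0 I[OF j] by blast
    show ?thesis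
    proof (rule diam_cover_sublevel_near_point[OF _ _ p _ c \<delta>])
      show "is_interval (I j)" "has_vderivs_on k \<Delta> (I j)"
        using I[OF j] has_vderivs_on_subset[OF D] by auto
      fix t assume t: "t \<in> I j"
      have "norm (vderiv_n p \<Delta> t - vderiv_n p \<Delta> t0) \<le> L * \<bar>t - t0\<bar>"
        using t0 t I[OF j] p(1) has_vderivs_onD[OF D] L(2)[of "Suc p"]
        by (intro norm_diff_le_vector_derivative_bound[of "{a..b}"]) auto
      also have "\<dots> \<le> L * (c / (2 * L))" using near[OF t] L by (intro mult_left_mono) auto
      finally show "norm (vderiv_n p \<Delta> t - vderiv_n p \<Delta> t0) \<le> c / 2" using L by simp
    qed
  qed
  then have "diam_cover (\<Union>j<N. {t\<in>I j. norm (\<Delta> t) \<le> \<delta>}) (real N * 3 ^ k) (2 * (2 * \<delta> / c) powr (1 / real k))"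
    using diam_cover_UN[of "{..<N}" "\<lambda>j. {t\<in>I j. norm (\<Delta> t) \<le> \<delta>}"] by simp
  moreover have "real N \<le> (b - a) * 2 * L / c + 1" using N c L by (simp add: field_simps)
  ultimately show ?thesis
    using cover by (elim diam_cover_mono) (auto intro: mult_right_mono)
qed

lemma diam_cover_sublevel_diff:
  fixes F G :: "real \<Rightarrow> 'a::real_inner"
  assumes ab: "a \<le> b" and T: "open T" "{a..b} \<subseteq> T"
    and F: "has_vderivs_on k F T" "\<And>q t. 1 \<le> q \<Longrightarrow> q \<le> Suc k \<Longrightarrow> t \<in> T \<Longrightarrow> norm (vderiv_n q F t) \<le> L ^ q"
    and G: "has_vderivs_on k G T" "\<And>q t. 1 \<le> q \<Longrightarrow> q \<le> Suc k \<Longrightarrow> t \<in> T \<Longrightarrow> norm (vderiv_n q G t) \<le> L ^ q"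
    and L: "1 \<le> L" and c: "0 < c"
    and transverse: "\<And>t. t \<in> {a..b} \<Longrightarrow> \<exists>p\<le>k. c < norm (vderiv_n p (\<lambda>t. F t - G t) t)"
    and \<delta>: "0 < \<delta>" "\<delta> \<le> c / 2"
  shows "diam_cover {t\<in>{a..b}. norm (F t - G t) \<le> \<delta>}
           (((b - a) * 4 / c + 1) * 3 ^ k * L ^ Suc k) (2 * (2 / c) powr (1 / real k) * \<delta> powr (1 / real k))"
proof -
  note diff = vderiv_n_diff[OF T(1) F(1) G(1)]
  have "norm (vderiv_n q (\<lambda>t. F t - G t) t) \<le> 2 * L ^ Suc k"
    if q: "1 \<le> q" "q \<le> Suc k" and t: "t \<in> {a..b}" for q t
  proof -
    have tT: "t \<in> T" using t T(2) by auto
    have "norm (vderiv_n q (\<lambda>t. F t - G t) t) \<le> L ^ q + L ^ q"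
      using F(2)[OF q tT] G(2)[OF q tT] norm_triangle_ineq4[of "vderiv_n q F t" "vderiv_n q G t"]
      by (simp add: diff(1)[OF q(2) tT])
    also have "L ^ q \<le> L ^ Suc k" using L q by (intro power_increasing) auto
    finally show ?thesis by simp
  qed
  then have "diam_cover {t\<in>{a..b}. norm (F t - G t) \<le> \<delta>}
      (((b - a) * 2 * (2 * L ^ Suc k) / c + 1) * 3 ^ k) (2 * (2 * \<delta> / c) powr (1 / real k))"
    using L c \<delta> transverse
    by (intro diam_cover_sublevel_of_transverse[OF ab has_vderivs_on_subset[OF diff(2) T(2)]]) auto
  moreover have "((b - a) * 2 * (2 * L ^ Suc k) / c + 1) * 3 ^ k \<le> ((b - a) * 4 / c + 1) * 3 ^ k * L ^ Suc k"
    using ab c one_le_power[OF L, of "Suc k"] by (simp add: field_simps)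
  moreover have "(2 * \<delta> / c) powr (1 / real k) = (2 / c) powr (1 / real k) * \<delta> powr (1 / real k)"
    using c \<delta> by (simp add: powr_mult[symmetric])
  ultimately show ?thesis by (elim diam_cover_mono) auto
qed

section \<open>Hausdorff dimension zero from summable covers\<close>

lemma hausdorff_pre_le_finite_covers:
  fixes \<C> :: "nat \<Rightarrow> 'a::metric_space set set"
  assumes \<delta>: "0 \<le> \<delta>" and fin: "\<And>n. finite (\<C> n)"
    and diam: "\<And>n A. A \<in> \<C> n \<Longrightarrow> bounded A \<and> diameter A \<le> \<delta>"
    and cover: "E \<subseteq> (\<Union>n. \<Union>(\<C> n))"
  shows "hausdorff_pre s \<delta> E \<le> (\<Sum>n. ennreal (\<Sum>A\<in>\<C> n. diameter A powr s))"
proof -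
  obtain xs where xs: "\<And>n. set (xs n) = \<C> n \<and> distinct (xs n)"
    using finite_distinct_list[OF fin] by metis
  define V where "V = (\<lambda>(n, j). if j < length (xs n) then xs n ! j else {})"
  have V: "bounded (V p) \<and> diameter (V p) \<le> \<delta>" for p
  proof (cases p)
    case (Pair n j)
    then show ?thesis using diam[of "xs n ! j" n] nth_mem[of j "xs n"] xs[of n] \<delta> by (auto simp: V_def)
  qed
  have "E \<subseteq> (\<Union>m. V (prod_decode m))"
  proof
    fix x assume "x \<in> E"
    then obtain n A where "A \<in> \<C> n" "x \<in> A" using cover by blast
    then obtain j where "j < length (xs n)" "xs n ! j = A" using xs by (metis in_set_conv_nth)
    then have "V (prod_decode (prod_encode (n, j))) = A" by (simp add: V_def)
    then show "x \<in> (\<Union>m. V (prod_decode m))" using \<open>x \<in> A\<close> by blast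
  qed
  then have "hausdorff_pre s \<delta> E \<le> (\<Sum>m. ennreal (diameter (V (prod_decode m)) powr s))"
    unfolding hausdorff_pre_def using V by (intro INF_lower) auto
  also have "\<dots> = (\<Sum>n. \<Sum>j. ennreal (diameter (V (n, j)) powr s))"
    by (rule suminf_ennreal_2dimen) simp
  also have "(\<lambda>n. \<Sum>j. ennreal (diameter (V (n, j)) powr s)) = (\<lambda>n. ennreal (\<Sum>A\<in>\<C> n. diameter A powr s))"
  proof
    fix n
    have "(\<Sum>j. ennreal (diameter (V (n, j)) powr s)) = (\<Sum>j<length (xs n). ennreal (diameter (xs n ! j) powr s))"
      by (subst suminf_finite[of "{..<length (xs n)}"]) (auto simp: V_def)
    also have "\<dots> = ennreal (sum_list (map (\<lambda>A. diameter A powr s) (xs n)))"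
      by (simp add: sum_ennreal sum_list_sum_nth atLeast0LessThan)
    also have "\<dots> = ennreal (\<Sum>A\<in>\<C> n. diameter A powr s)"
      using xs[of n] by (simp add: sum_list_distinct_conv_sum_set)
    finally show "(\<Sum>j. ennreal (diameter (V (n, j)) powr s)) = ennreal (\<Sum>A\<in>\<C> n. diameter A powr s)" .
  qed
  finally show ?thesis .
qed

lemma hausdorff_pre_le_tail_sum:
  fixes \<C> :: "nat \<Rightarrow> 'a::metric_space set set"
  assumes \<delta>: "0 \<le> \<delta>" and fin: "\<And>n. finite (\<C> n)"
    and diam: "\<And>n A. N < n \<Longrightarrow> A \<in> \<C> n \<Longrightarrow> bounded A \<and> diameter A \<le> \<delta>"
    and a: "\<And>n. (\<Sum>A\<in>\<C> n. diameter A powr s) \<le> a n" and summable: "summable a"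
    and cover: "E \<subseteq> (\<Union>n\<in>{N<..}. \<Union>(\<C> n))"
  shows "hausdorff_pre s \<delta> E \<le> ennreal (\<Sum>i. a (i + Suc N))"
proof -
  define g where "g n = (if N < n then a n else 0)" for n
  have a0: "0 \<le> a n" for n using order_trans[OF sum_nonneg a] by simp
  then have g: "0 \<le> g n" for n by (simp add: g_def)
  have "summable g" by (rule summable_comparison_test'[OF summable]) (simp add: g_def a0)
  have "hausdorff_pre s \<delta> E \<le> (\<Sum>n. ennreal (\<Sum>A\<in>(if N < n then \<C> n else {}). diameter A powr s))"
  proof (rule hausdorff_pre_le_finite_covers)
    show "E \<subseteq> (\<Union>n. \<Union>(if N < n then \<C> n else {}))"
    proof
      fix x assume "x \<in> E"
      then obtain n A where "N < n" "A \<in> \<C> n" "x \<in> A" using cover by blast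
      then show "x \<in> (\<Union>n. \<Union>(if N < n then \<C> n else {}))" by auto
    qed
  qed (use \<delta> fin diam in \<open>auto split: if_splits\<close>)
  also have "\<dots> \<le> (\<Sum>n. ennreal (g n))"
  proof (rule suminf_le)
    show "ennreal (\<Sum>A\<in>(if N < n then \<C> n else {}). diameter A powr s) \<le> ennreal (g n)" for n
      using a[of n] by (auto simp: g_def intro: ennreal_leI)
  qed (rule summableI)+
  also have "\<dots> = ennreal (suminf g)" by (rule suminf_ennreal2[OF g \<open>summable g\<close>])
  also have "suminf g = (\<Sum>i. a (i + Suc N))"
    using suminf_split_initial_segment[OF \<open>summable g\<close>, of "Suc N"] by (simp add: g_def)
  finally show ?thesis .
qed

lemma hausdorff_outer_eq_0_if_summable_covers:
  fixes \<C> :: "nat \<Rightarrow> 'a::metric_space set set" and r :: "nat \<Rightarrow> real"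
  assumes s: "0 < s" and fin: "\<And>n. finite (\<C> n)"
    and diam: "\<And>n A. A \<in> \<C> n \<Longrightarrow> bounded A \<and> diameter A \<le> r n"
    and r: "r \<longlonglongrightarrow> 0" and summable: "summable (\<lambda>n. real (card (\<C> n)) * r n powr s)"
    and cover: "\<And>N. E \<subseteq> (\<Union>n\<in>{N<..}. \<Union>(\<C> n))"
  shows "hausdorff_outer s E = 0"
proof -
  define a where "a n = real (card (\<C> n)) * r n powr s" for n
  have a: "(\<Sum>A\<in>\<C> n. diameter A powr s) \<le> a n" for n
  proof -
    have "(\<Sum>A\<in>\<C> n. diameter A powr s) \<le> (\<Sum>A\<in>\<C> n. r n powr s)"
      using diam s by (intro sum_mono powr_mono2) (auto simp: diameter_ge_0)
    then show ?thesis by (simp add: a_def)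
  qed
  have le: "hausdorff_pre s \<delta> E \<le> ennreal \<eta>" if \<delta>: "0 < \<delta>" and \<eta>: "0 < \<eta>" for \<delta> \<eta>
  proof -
    obtain N1 where N1: "\<And>n. N1 \<le> n \<Longrightarrow> norm (\<Sum>i. a (i + n)) < \<eta>"
      using suminf_exist_split[OF \<eta> summable] unfolding a_def by blast
    obtain N2 where N2: "\<And>n. N2 \<le> n \<Longrightarrow> norm (r n) < \<delta>"
      using LIMSEQ_D[OF r \<delta>] by auto
    define N where "N = max N1 N2"
    have "hausdorff_pre s \<delta> E \<le> ennreal (\<Sum>i. a (i + Suc N))"
    proof (rule hausdorff_pre_le_tail_sum[OF _ fin _ a])
      show "bounded A \<and> diameter A \<le> \<delta>" if "N < n" "A \<in> \<C> n" for n A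
        using diam[OF that(2)] N2[of n] that(1) by (auto simp: N_def)
    qed (use \<delta> summable cover in \<open>auto simp: a_def\<close>)
    also have "\<dots> \<le> ennreal \<eta>"
    proof (rule ennreal_leI)
      have "N1 \<le> Suc N" by (simp add: N_def le_SucI)
      from N1[OF this] have "norm (\<Sum>i. a (i + Suc N)) < \<eta>" .
      then show "(\<Sum>i. a (i + Suc N)) \<le> \<eta>" by simp
    qed
    finally show ?thesis .
  qed
  have "hausdorff_pre s \<delta> E = 0" if "0 < \<delta>" for \<delta>
  proof -
    have "hausdorff_pre s \<delta> E \<le> 0"
    proof (rule ennreal_le_epsilon)
      fix e :: real assume "0 < e"
      then show "hausdorff_pre s \<delta> E \<le> 0 + ennreal e" by (simp only: add_0_left le[OF that])
    qed
    then show ?thesis by simp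
  qed
  then show ?thesis by (simp add: hausdorff_outer_def)
qed

lemma hausdorff_dim_eq_0I:
  assumes "\<And>s. 0 < s \<Longrightarrow> hausdorff_outer s E = 0"
  shows "hausdorff_dim E = 0"
proof (rule antisym)
  show "hausdorff_dim E \<le> 0"
  proof (rule ereal_le_epsilon2)
    fix e :: real assume "0 < e"
    then show "hausdorff_dim E \<le> 0 + ereal e"
      unfolding hausdorff_dim_def using assms by (intro INF_lower2[of e]) auto
  qed
  show "0 \<le> hausdorff_dim E" unfolding hausdorff_dim_def by (rule INF_greatest) auto
qed

lemma powr_mult_power:
  fixes K \<tau> s :: real
  assumes "0 \<le> K" "0 < \<tau>"
  shows "(K * \<tau> ^ n) powr s = K powr s * (\<tau> powr s) ^ n"
  using assms by (simp add: powr_mult powr_powr mult.commute flip: powr_realpow)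

lemma exists_small_base_powr:
  fixes B s :: real
  assumes \<tau>0: "0 < \<tau>0" and B: "0 \<le> B" and s: "0 < s"
  shows "\<exists>\<tau>. 0 < \<tau> \<and> \<tau> \<le> \<tau>0 \<and> \<tau> < 1 \<and> B * \<tau> powr s \<le> 1/2"
proof (intro exI conjI)
  define \<tau> where "\<tau> = min (min \<tau>0 (1/2)) ((1 / (2 * (B + 1))) powr (1 / s))"
  show \<tau>: "0 < \<tau>" "\<tau> \<le> \<tau>0" "\<tau> < 1" using \<tau>0 B by (auto simp: \<tau>_def)
  have "\<tau> \<le> (1 / (2 * (B + 1))) powr (1 / s)" by (simp add: \<tau>_def)
  then have "\<tau> powr s \<le> ((1 / (2 * (B + 1))) powr (1 / s)) powr s"
    using \<tau> s by (intro powr_mono2) auto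
  also have "\<dots> = 1 / (2 * (B + 1))" using s B by (simp add: powr_powr)
  finally have "B * \<tau> powr s \<le> (B + 1) * (1 / (2 * (B + 1)))"
    using B by (intro mult_mono) auto
  also have "\<dots> = 1/2" using B by (simp add: field_simps)
  finally show "B * \<tau> powr s \<le> 1/2" .
qed

text \<open>Covers by \<open>A B\<^sup>n\<close> sets of diameter \<open>K \<tau>\<^sup>n\<close>, available for arbitrarily small \<open>\<tau>\<close>,
  have summable s-dimensional content as soon as \<open>B \<tau>\<^sup>s < 1\<close>.\<close>
lemma hausdorff_dim_eq_0_if_geometric_covers:
  fixes E :: "'a::metric_space set"
  assumes \<tau>0: "0 < \<tau>0" and B: "0 \<le> B" and K: "0 \<le> K"
    and covers: "\<And>\<tau>. 0 < \<tau> \<Longrightarrow> \<tau> \<le> \<tau>0 \<Longrightarrow>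
      \<exists>S. (\<forall>N. E \<subseteq> (\<Union>n\<in>{N<..}. S n)) \<and> (\<forall>n. diam_cover (S n) (A * B ^ n) (K * \<tau> ^ n))"
  shows "hausdorff_dim E = 0"
proof (rule hausdorff_dim_eq_0I)
  fix s :: real assume s: "0 < s"
  obtain \<tau> where \<tau>: "0 < \<tau>" "\<tau> \<le> \<tau>0" "\<tau> < 1" and B\<tau>: "B * \<tau> powr s \<le> 1/2"
    using exists_small_base_powr[OF \<tau>0 B s] by blast
  obtain S where S_covers: "\<And>N. E \<subseteq> (\<Union>n\<in>{N<..}. S n)"
    and S: "\<And>n. diam_cover (S n) (A * B ^ n) (K * \<tau> ^ n)"
    using covers[OF \<tau>(1,2)] by blast
  obtain \<C> where fin: "\<And>n. finite (\<C> n)" and card: "\<And>n. real (card (\<C> n)) \<le> A * B ^ n"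
    and diam: "\<And>n U. U \<in> \<C> n \<Longrightarrow> bounded U \<and> diameter U \<le> K * \<tau> ^ n"
    and cover: "\<And>n. S n \<subseteq> \<Union>(\<C> n)"
    using S unfolding diam_cover_def by metis
  have A: "0 \<le> A" using card[of 0] by (simp add: order_trans)
  show "hausdorff_outer s E = 0"
  proof (rule hausdorff_outer_eq_0_if_summable_covers[OF s fin diam])
    show "(\<lambda>n. K * \<tau> ^ n) \<longlonglongrightarrow> 0"
      using \<tau> by (intro tendsto_mult_right_zero LIMSEQ_power_zero) simp
    have bound: "real (card (\<C> n)) * (K * \<tau> ^ n) powr s \<le> A * K powr s * (1/2) ^ n" for n
    proof -
      have "real (card (\<C> n)) * (K * \<tau> ^ n) powr s = real (card (\<C> n)) * (K powr s * (\<tau> powr s) ^ n)"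
        using \<tau> K by (simp add: powr_mult_power)
      also have "\<dots> \<le> A * B ^ n * (K powr s * (\<tau> powr s) ^ n)"
        using card[of n] by (intro mult_right_mono) auto
      also have "\<dots> = A * K powr s * (B * \<tau> powr s) ^ n" by (simp add: power_mult_distrib)
      also have "\<dots> \<le> A * K powr s * (1/2) ^ n"
        using A B\<tau> B by (intro mult_left_mono power_mono) auto
      finally show ?thesis .
    qed
    have "summable (\<lambda>n. A * K powr s * (1/2::real) ^ n)"
      by (rule summable_mult) (simp add: summable_geometric)
    then show "summable (\<lambda>n. real (card (\<C> n)) * (K * \<tau> ^ n) powr s)"
    proof (rule summable_comparison_test'[where N = 0])
      show "norm (real (card (\<C> n)) * (K * \<tau> ^ n) powr s) \<le> A * K powr s * (1/2) ^ n" for n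
        using bound[of n] by simp
    qed
    show "E \<subseteq> (\<Union>n\<in>{N<..}. \<Union>(\<C> n))" for N
    proof
      fix x assume "x \<in> E"
      then obtain n where "N < n" "x \<in> S n" using S_covers[of N] by blast
      then show "x \<in> (\<Union>n\<in>{N<..}. \<Union>(\<C> n))" using cover[of n] by blast
    qed
  qed
qed

section \<open>Partial derivatives of real-analytic maps\<close>

definition pow_deriv :: "nat \<Rightarrow> nat \<Rightarrow> real \<Rightarrow> real" where
  "pow_deriv b k z = (\<Prod>j<b. real (k - j)) * z ^ (k - b)"

lemma pow_deriv_0 [simp]: "pow_deriv 0 k z = z ^ k"
  by (simp add: pow_deriv_def)

lemma has_real_derivative_pow_deriv: "(pow_deriv b k has_real_derivative pow_deriv (Suc b) k z) (at z)"
proof -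
  have "((\<lambda>z. (\<Prod>j<b. real (k - j)) * z ^ (k - b)) has_real_derivative
          (\<Prod>j<b. real (k - j)) * (real (k - b) * z ^ (k - b - Suc 0))) (at z)"
    by (intro DERIV_cmult DERIV_pow)
  then show ?thesis unfolding pow_deriv_def[abs_def] by (simp add: mult.assoc)
qed

lemma pow_deriv_nonneg: "0 \<le> r \<Longrightarrow> 0 \<le> pow_deriv b k r"
  by (simp add: pow_deriv_def prod_nonneg)

lemma abs_pow_deriv_le:
  assumes "\<bar>z\<bar> \<le> r"
  shows "\<bar>pow_deriv b k z\<bar> \<le> pow_deriv b k r"
proof -
  have "\<bar>pow_deriv b k z\<bar> = (\<Prod>j<b. real (k - j)) * \<bar>z\<bar> ^ (k - b)"
    by (simp add: pow_deriv_def abs_mult power_abs prod_nonneg)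
  also have "\<dots> \<le> (\<Prod>j<b. real (k - j)) * r ^ (k - b)"
    using assms by (intro mult_left_mono power_mono prod_nonneg) auto
  finally show ?thesis by (simp add: pow_deriv_def)
qed

lemma bounded_pow_times_geometric:
  fixes q :: real
  assumes "0 \<le> q" "q < 1"
  shows "\<exists>B. \<forall>k. real k ^ b * q ^ k \<le> B"
proof (cases "b = 0")
  case True
  then show ?thesis using assms by (intro exI[of _ 1]) (auto intro: power_le_one)
next
  case False
  define q' where "q' = root b q"
  have q': "0 \<le> q'" "q' < 1" "q' ^ b = q" using assms False by (simp_all add: q'_def real_root_ge_zero)
  have "(\<lambda>n. of_nat n * q' ^ n) \<longlonglongrightarrow> (0::real)"
    by (rule powser_times_n_limit_0) (use q' in auto)
  then have "Bseq (\<lambda>n. of_nat n * q' ^ n :: real)" by (rule convergent_imp_Bseq[OF convergentI])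
  then obtain K where K: "\<And>n. norm (of_nat n * q' ^ n :: real) \<le> K" unfolding Bseq_def by auto
  have "real k ^ b * q ^ k \<le> K ^ b" for k
  proof -
    have "real k ^ b * q ^ k = (real k * q' ^ k) ^ b"
      by (simp add: power_mult_distrib q'(3)[symmetric] power_mult[symmetric] mult.commute)
    also have "\<dots> \<le> K ^ b" using K[of k] q' by (intro power_mono) auto
    finally show ?thesis .
  qed
  then show ?thesis by blast
qed

lemma pow_deriv_le_geometric:
  assumes "0 < r1" "r1 < r"
  shows "\<exists>K. \<forall>k. pow_deriv b k r1 \<le> K * r ^ k"
proof -
  obtain B where B: "\<And>k. real k ^ b * (r1 / r) ^ k \<le> B"
    using bounded_pow_times_geometric[of "r1 / r" b] assms by auto
  have "pow_deriv b k r1 \<le> (B / r1 ^ b) * r ^ k" for k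
  proof (cases "b \<le> k")
    case False
    then have "(\<Prod>j<b. real (k - j)) = 0" by (intro prod_zero bexI[of _ k]) auto
    then have "pow_deriv b k r1 = 0" by (simp add: pow_deriv_def)
    moreover have "0 \<le> B" using order_trans[OF _ B[of 0]] False by simp
    ultimately show ?thesis using assms by simp
  next
    case True
    have "(\<Prod>j<b. real (k - j)) \<le> (\<Prod>j<b. real k)" by (intro prod_mono) auto
    then have "pow_deriv b k r1 \<le> real k ^ b * r1 ^ (k - b)"
      unfolding pow_deriv_def using assms by (intro mult_right_mono) auto
    also have "\<dots> = (real k ^ b * (r1 / r) ^ k) * r ^ k / r1 ^ b"
      using assms True by (simp add: power_divide field_simps power_diff)
    also have "\<dots> \<le> B * r ^ k / r1 ^ b"
      using assms B[of k] by (intro divide_right_mono mult_right_mono) auto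
    finally show ?thesis by simp
  qed
  then show ?thesis by blast
qed

text \<open>Points of \<open>\<real>\<^sup>d \<times> \<real>\<close> have their coordinates indexed by \<open>'d option\<close>, None being the
  time coordinate.\<close>
definition coord :: "'d option \<Rightarrow> (real^'d) \<times> real \<Rightarrow> real" where
  "coord w y = (case w of None \<Rightarrow> snd y | Some i \<Rightarrow> fst y $ i)"

lemma coord_simps [simp]: "coord None y = snd y" "coord (Some i) y = fst y $ i"
  by (simp_all add: coord_def)

lemma bounded_linear_coord: "bounded_linear (coord w)"
  by (cases w) (auto simp: coord_def[abs_def] intro: bounded_linear_snd
      bounded_linear_compose[OF bounded_linear_vec_nth bounded_linear_fst, unfolded o_def])

lemma coord_scaleR [simp]: "coord w (r *\<^sub>R y) = r * coord w y"
  by (cases w) simp_all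

lemma abs_coord_le: "\<bar>coord w y\<bar> \<le> norm y"
proof (cases w)
  case None
  then show ?thesis using norm_snd_le[of "snd y" "fst y"] by simp
next
  case (Some i)
  then show ?thesis using component_le_norm_cart[of "fst y" i] norm_fst_le[of "fst y" "snd y"] by simp
qed

lemma norm_sum_coord_scaleR_le:
  fixes R :: "'d::finite option \<Rightarrow> 'b::real_normed_vector"
  assumes "\<And>w. norm (R w) \<le> e"
  shows "norm (\<Sum>w\<in>UNIV. coord w h *\<^sub>R R w) \<le> real CARD('d option) * e * norm h"
proof -
  have "norm (\<Sum>w\<in>UNIV. coord w h *\<^sub>R R w) \<le> (\<Sum>w\<in>UNIV. \<bar>coord w h\<bar> * norm (R w))"
    by (rule order_trans[OF norm_sum]) simp
  also have "\<dots> \<le> (\<Sum>w\<in>(UNIV :: 'd option set). norm h * e)"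
    using assms by (intro sum_mono mult_mono abs_coord_le) (auto intro: order_trans[OF norm_ge_zero])
  finally show ?thesis by (simp add: mult_ac)
qed

lemma prod_UNIV_option: "(\<Prod>w\<in>UNIV. f w) = f None * (\<Prod>i\<in>UNIV. f (Some i))"
  for f :: "'d::finite option \<Rightarrow> 'a::comm_monoid_mult"
  by (simp add: UNIV_option_conv prod.reindex)

definition coord_basis :: "'d option \<Rightarrow> (real^'d) \<times> real" where
  "coord_basis w = (case w of None \<Rightarrow> (0, 1) | Some i \<Rightarrow> (axis i 1, 0))"

lemma sum_coord_coord_basis:
  fixes F :: "'d::finite option \<Rightarrow> 'b::real_vector"
  shows "(\<Sum>v\<in>UNIV. coord v (coord_basis w) *\<^sub>R F v) = F w"
proof -
  have "coord v (coord_basis w) *\<^sub>R F v = (if v = w then F v else 0)" for v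
    by (cases v; cases w) (auto simp: coord_basis_def axis_def)
  then show ?thesis by simp
qed

definition exponent :: "('d \<Rightarrow> nat) \<times> nat \<Rightarrow> 'd option \<Rightarrow> nat" where
  "exponent \<kappa> w = (case w of None \<Rightarrow> snd \<kappa> | Some i \<Rightarrow> fst \<kappa> i)"

definition monomial_deriv ::
  "('d option \<Rightarrow> nat) \<Rightarrow> ('d \<Rightarrow> nat) \<times> nat \<Rightarrow> (real^'d) \<times> real \<Rightarrow> (real^'d) \<times> real \<Rightarrow> real" where
  "monomial_deriv \<beta> \<kappa> p0 y = (\<Prod>w\<in>UNIV. pow_deriv (\<beta> w) (exponent \<kappa> w) (coord w y - coord w p0))"

definition monomial_deriv_bound :: "('d option \<Rightarrow> nat) \<Rightarrow> real \<Rightarrow> ('d \<Rightarrow> nat) \<times> nat \<Rightarrow> real" where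
  "monomial_deriv_bound \<beta> r \<kappa> = (\<Prod>w\<in>UNIV. pow_deriv (\<beta> w) (exponent \<kappa> w) r)"

lemma monomial_deriv_bound_nonneg: "0 \<le> r \<Longrightarrow> 0 \<le> monomial_deriv_bound \<beta> r \<kappa>"
  unfolding monomial_deriv_bound_def by (intro prod_nonneg pow_deriv_nonneg)

lemma abs_monomial_deriv_le:
  assumes "dist y p0 \<le> r"
  shows "\<bar>monomial_deriv \<beta> \<kappa> p0 y\<bar> \<le> monomial_deriv_bound \<beta> r \<kappa>"
proof -
  have "\<bar>coord w y - coord w p0\<bar> \<le> r" for w
    using abs_coord_le[of w "y - p0"] assms by (cases w) (simp_all add: dist_norm)
  then show ?thesis
    unfolding monomial_deriv_def monomial_deriv_bound_def abs_prod
    by (intro prod_mono conjI abs_pow_deriv_le) auto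
qed

text \<open>Differentiating a power series shrinks its domain of absolute convergence only by an
  arbitrarily small amount.\<close>
lemma summable_on_monomial_deriv_bound:
  assumes sm: "(\<lambda>\<kappa>. monomial_deriv_bound (\<lambda>_. 0) r \<kappa> * M \<kappa>) summable_on UNIV"
    and M: "\<And>\<kappa>. 0 \<le> M \<kappa>" and r1: "0 < r1" "r1 < r"
  shows "(\<lambda>\<kappa>. monomial_deriv_bound \<beta> r1 \<kappa> * M \<kappa>) summable_on UNIV"
proof -
  obtain K where K: "\<And>b k. pow_deriv b k r1 \<le> K b * r ^ k"
    using pow_deriv_le_geometric[OF r1] by metis
  have K0: "0 \<le> K b" for b
    using K[of b 0] pow_deriv_nonneg[of r1 b 0] r1 by simp
  have le: "monomial_deriv_bound \<beta> r1 \<kappa> \<le> (\<Prod>w\<in>UNIV. K (\<beta> w)) * monomial_deriv_bound (\<lambda>_. 0) r \<kappa>" for \<kappa>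
  proof -
    have "monomial_deriv_bound \<beta> r1 \<kappa> \<le> (\<Prod>w\<in>UNIV. K (\<beta> w) * r ^ exponent \<kappa> w)"
      unfolding monomial_deriv_bound_def using r1 by (intro prod_mono conjI K pow_deriv_nonneg) auto
    then show ?thesis by (simp add: monomial_deriv_bound_def prod.distrib)
  qed
  have "(\<lambda>\<kappa>. (\<Prod>w\<in>UNIV. K (\<beta> w)) * (monomial_deriv_bound (\<lambda>_. 0) r \<kappa> * M \<kappa>)) summable_on UNIV"
    by (intro summable_on_cmult_right sm)
  then show ?thesis
  proof (rule summable_on_comparison_test)
    fix \<kappa>
    show "monomial_deriv_bound \<beta> r1 \<kappa> * M \<kappa> \<le> (\<Prod>w\<in>UNIV. K (\<beta> w)) * (monomial_deriv_bound (\<lambda>_. 0) r \<kappa> * M \<kappa>)"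
      using le[of \<kappa>] M[of \<kappa>] by (simp add: mult.assoc[symmetric] mult_right_mono)
    show "0 \<le> monomial_deriv_bound \<beta> r1 \<kappa> * M \<kappa>"
      using r1 by (intro mult_nonneg_nonneg monomial_deriv_bound_nonneg M) simp
  qed
qed

lemma has_derivative_monomial_deriv:
  fixes p0 :: "(real^'d) \<times> real"
  shows "(monomial_deriv \<beta> \<kappa> p0 has_derivative
           (\<lambda>h. \<Sum>w\<in>UNIV. coord w h * monomial_deriv (\<beta>(w := Suc (\<beta> w))) \<kappa> p0 y0)) (at y0 within S)"
proof -
  define g where "g \<beta> w y = pow_deriv (\<beta> w) (exponent \<kappa> w) (coord w y - coord w p0)" for \<beta> w y
  have "(g \<beta> w has_derivative (\<lambda>h. coord w h * g (\<beta>(w := Suc (\<beta> w))) w y0)) (at y0 within S)" for w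
  proof -
    have "((\<lambda>y. coord w y - coord w p0) has_derivative (\<lambda>h. coord w h - 0)) (at y0 within S)"
      by (intro has_derivative_diff bounded_linear_imp_has_derivative bounded_linear_coord has_derivative_const)
    from has_derivative_compose[OF this has_real_derivative_pow_deriv[unfolded has_field_derivative_def]]
    show ?thesis unfolding g_def[abs_def] by (simp add: mult.commute)
  qed
  then have "((\<lambda>y. \<Prod>w\<in>UNIV. g \<beta> w y) has_derivative
      (\<lambda>h. \<Sum>w\<in>UNIV. coord w h * g (\<beta>(w := Suc (\<beta> w))) w y0 * (\<Prod>v\<in>UNIV - {w}. g \<beta> v y0))) (at y0 within S)"
    by (rule has_derivative_prod)
  moreover have "g (\<beta>(w := Suc (\<beta> w))) w y0 * (\<Prod>v\<in>UNIV - {w}. g \<beta> v y0)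
      = monomial_deriv (\<beta>(w := Suc (\<beta> w))) \<kappa> p0 y0" for w
    unfolding monomial_deriv_def by (subst prod.remove[of _ w]) (auto simp: g_def intro!: prod.cong)
  ultimately show ?thesis by (simp add: monomial_deriv_def[abs_def] g_def mult.assoc)
qed

definition series_deriv :: "(('d \<Rightarrow> nat) \<times> nat \<Rightarrow> 'b::real_normed_vector) \<Rightarrow> ('d option \<Rightarrow> nat)
    \<Rightarrow> (real^'d) \<times> real \<Rightarrow> (real^'d) \<times> real \<Rightarrow> 'b" where
  "series_deriv c \<beta> p0 y = (\<Sum>\<^sub>\<infinity>\<kappa>. monomial_deriv \<beta> \<kappa> p0 y *\<^sub>R c \<kappa>)"

text \<open>The term-by-term differentiation theorem \<open>has_derivative_series\<close> of the library is
  stated for series indexed by nat.\<close>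
definition exponent_enum :: "nat \<Rightarrow> ('d::finite \<Rightarrow> nat) \<times> nat" where
  "exponent_enum = from_nat_into UNIV"

lemma bij_exponent_enum: "bij_betw exponent_enum UNIV UNIV"
  unfolding exponent_enum_def by (intro bij_betw_from_nat_into countableI_type) (simp add: finite_prod)

lemma sums_exponent_enum:
  fixes f :: "('d::finite \<Rightarrow> nat) \<times> nat \<Rightarrow> 'b::banach"
  assumes M: "M summable_on UNIV" and f: "\<And>\<kappa>. norm (f \<kappa>) \<le> M \<kappa>"
  shows "(\<lambda>n. f (exponent_enum n)) sums (\<Sum>\<^sub>\<infinity>\<kappa>. f \<kappa>)" "summable (\<lambda>n. M (exponent_enum n))"
proof -
  have M0: "0 \<le> M \<kappa>" for \<kappa> using order_trans[OF norm_ge_zero f] .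
  have "(\<lambda>\<kappa>. norm (M \<kappa>)) summable_on UNIV"
    using M summable_on_iff_abs_summable_on_real by blast
  then have "(\<lambda>\<kappa>. norm (f \<kappa>)) summable_on UNIV"
    by (rule Infinite_Sum.abs_summable_on_comparison_test) (use f M0 in auto)
  then have "(f has_sum (\<Sum>\<^sub>\<infinity>\<kappa>. f \<kappa>)) UNIV" by (rule has_sum_infsum[OF abs_summable_summable])
  then have "((\<lambda>n. f (exponent_enum n)) has_sum (\<Sum>\<^sub>\<infinity>\<kappa>. f \<kappa>)) UNIV"
    using has_sum_reindex_bij_betw[OF bij_exponent_enum] by blast
  then show "(\<lambda>n. f (exponent_enum n)) sums (\<Sum>\<^sub>\<infinity>\<kappa>. f \<kappa>)" by (rule has_sum_imp_sums)
  have "(M has_sum (\<Sum>\<^sub>\<infinity>\<kappa>. M \<kappa>)) UNIV" using M by (rule has_sum_infsum)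
  then have "((\<lambda>n. M (exponent_enum n)) has_sum (\<Sum>\<^sub>\<infinity>\<kappa>. M \<kappa>)) UNIV"
    using has_sum_reindex_bij_betw[OF bij_exponent_enum] by blast
  then show "summable (\<lambda>n. M (exponent_enum n))" using has_sum_imp_sums sums_summable by blast
qed

lemma series_deriv_expansion:
  fixes c :: "('d::finite \<Rightarrow> nat) \<times> nat \<Rightarrow> 'b::banach"
  assumes sm: "(\<lambda>\<kappa>. monomial_deriv_bound (\<lambda>_. 0) r \<kappa> * norm (c \<kappa>)) summable_on UNIV"
    and r1: "0 < r1" "r1 < r"
  shows "\<And>y. dist y p0 \<le> r1 \<Longrightarrow>
      (\<lambda>n. monomial_deriv \<beta> (exponent_enum n) p0 y *\<^sub>R c (exponent_enum n)) sums series_deriv c \<beta> p0 y"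
    and "\<And>e. 0 < e \<Longrightarrow> \<forall>\<^sub>F n in sequentially. \<forall>y. dist y p0 \<le> r1 \<longrightarrow>
      norm (series_deriv c \<beta> p0 y - (\<Sum>i<n. monomial_deriv \<beta> (exponent_enum i) p0 y *\<^sub>R c (exponent_enum i))) < e"
proof -
  define T where "T y i = monomial_deriv \<beta> (exponent_enum i) p0 y *\<^sub>R c (exponent_enum i)" for y i
  define B where "B i = monomial_deriv_bound \<beta> r1 (exponent_enum i) * norm (c (exponent_enum i))" for i
  have M: "(\<lambda>\<kappa>. monomial_deriv_bound \<beta> r1 \<kappa> * norm (c \<kappa>)) summable_on UNIV"
    by (rule summable_on_monomial_deriv_bound[OF sm _ r1]) simp
  have TB: "norm (monomial_deriv \<beta> \<kappa> p0 y *\<^sub>R c \<kappa>) \<le> monomial_deriv_bound \<beta> r1 \<kappa> * norm (c \<kappa>)"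
    if "dist y p0 \<le> r1" for y \<kappa>
    using abs_monomial_deriv_le[OF that] by (simp add: mult_right_mono)
  show T: "(\<lambda>n. T y n) sums series_deriv c \<beta> p0 y" if "dist y p0 \<le> r1" for y
    unfolding series_deriv_def T_def by (rule sums_exponent_enum(1)[OF M TB[OF that]])
  have B: "summable B"
    unfolding B_def by (rule sums_exponent_enum(2)[OF M TB[of p0]]) (use r1 in simp)
  have tail: "norm (series_deriv c \<beta> p0 y - (\<Sum>i<n. T y i)) \<le> (\<Sum>i. B (i + n))"
    if y: "dist y p0 \<le> r1" for y n
  proof -
    have Bn: "summable (\<lambda>i. B (i + n))" using summable_ignore_initial_segment[OF B] .
    have le: "norm (T y (i + n)) \<le> B (i + n)" for i unfolding T_def B_def by (rule TB[OF y])
    then have Tn: "summable (\<lambda>i. norm (T y (i + n)))" by (intro summable_comparison_test'[OF Bn]) simp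
    have "series_deriv c \<beta> p0 y - (\<Sum>i<n. T y i) = (\<Sum>i. T y (i + n))"
      using suminf_minus_initial_segment[OF sums_summable[OF T[OF y]], of n] sums_unique[OF T[OF y]] by simp
    also have "norm \<dots> \<le> (\<Sum>i. norm (T y (i + n)))" by (rule summable_norm[OF Tn])
    also have "\<dots> \<le> (\<Sum>i. B (i + n))" by (rule suminf_le[OF le Tn Bn])
    finally show ?thesis .
  qed
  show "\<forall>\<^sub>F n in sequentially. \<forall>y. dist y p0 \<le> r1 \<longrightarrow> norm (series_deriv c \<beta> p0 y - (\<Sum>i<n. T y i)) < e"
    if e: "0 < e" for e
  proof -
    obtain N where "\<And>n. N \<le> n \<Longrightarrow> norm (\<Sum>i. B (i + n)) < e" using suminf_exist_split[OF e B] by blast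
    then show ?thesis
      by (intro eventually_sequentiallyI[of N]) (force intro: le_less_trans[OF tail])
  qed
qed

text \<open>Term-by-term differentiation, justified by the uniform convergence of the differentiated
  series on a smaller ball.\<close>
lemma has_derivative_series_deriv:
  fixes c :: "('d::finite \<Rightarrow> nat) \<times> nat \<Rightarrow> 'b::banach"
  assumes sm: "(\<lambda>\<kappa>. monomial_deriv_bound (\<lambda>_. 0) r \<kappa> * norm (c \<kappa>)) summable_on UNIV"
    and r1: "0 < r1" "r1 < r" and y0: "y0 \<in> ball p0 r1"
  shows "(series_deriv c \<beta> p0 has_derivative
           (\<lambda>h. \<Sum>w\<in>UNIV. coord w h *\<^sub>R series_deriv c (\<beta>(w := Suc (\<beta> w))) p0 y0)) (at y0)"
proof -
  define S where "S = ball p0 r1"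
  have y0S: "y0 \<in> S" using y0 by (simp add: S_def)
  have S_dist: "dist y p0 \<le> r1" if "y \<in> S" for y using that by (simp add: S_def dist_commute)
  note expansion = series_deriv_expansion[OF sm r1]
  define f where "f n y = monomial_deriv \<beta> (exponent_enum n) p0 y *\<^sub>R c (exponent_enum n)" for n y
  define f' where "f' n y = (\<lambda>h. (\<Sum>w\<in>UNIV. coord w h * monomial_deriv (\<beta>(w := Suc (\<beta> w))) (exponent_enum n) p0 y) *\<^sub>R c (exponent_enum n))" for n y
  define g' where "g' y = (\<lambda>h. \<Sum>w\<in>UNIV. coord w h *\<^sub>R series_deriv c (\<beta>(w := Suc (\<beta> w))) p0 y)" for y
  define R where "R w n y = series_deriv c (\<beta>(w := Suc (\<beta> w))) p0 y
      - (\<Sum>i<n. monomial_deriv (\<beta>(w := Suc (\<beta> w))) (exponent_enum i) p0 y *\<^sub>R c (exponent_enum i))" for w n y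
  define D where "D = real CARD('d option)"
  have D: "0 < D" by (simp add: D_def)
  have "\<exists>g. \<forall>y\<in>S. (\<lambda>n. f n y) sums g y \<and> (g has_derivative g' y) (at y within S)"
  proof (rule has_derivative_series)
    show "convex S" by (simp add: S_def)
    show "y0 \<in> S" by (rule y0S)
    show "(\<lambda>n. f n y0) sums series_deriv c \<beta> p0 y0"
      unfolding f_def by (rule expansion(1)[OF S_dist[OF y0S]])
    show "(f n has_derivative f' n y) (at y within S)" if "y \<in> S" for n y
      unfolding f_def[abs_def] f'_def by (intro has_derivative_scaleR_left has_derivative_monomial_deriv)
    show "\<forall>\<^sub>F n in sequentially. \<forall>y\<in>S. \<forall>h. norm (sum (\<lambda>i. f' i y h) {..<n} - g' y h) \<le> e * norm h"
      if e: "0 < e" for e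
    proof -
      have "\<forall>\<^sub>F n in sequentially. \<forall>w. \<forall>y. dist y p0 \<le> r1 \<longrightarrow> norm (R w n y) < e / D"
        using expansion(2) e D unfolding R_def by (intro eventually_all_finite) simp
      then show ?thesis
      proof eventually_elim
        case (elim n)
        show ?case
        proof (intro ballI allI)
          fix y h assume y: "y \<in> S"
          have "sum (\<lambda>i. f' i y h) {..<n} - g' y h = - (\<Sum>w\<in>UNIV. coord w h *\<^sub>R R w n y)"
            unfolding f'_def g'_def R_def
            by (simp add: scaleR_sum_left scaleR_sum_right sum_subtractf scaleR_diff_right
                sum.swap[of _ "{..<n}"] algebra_simps)
          also have "norm \<dots> \<le> D * (e / D) * norm h"
          proof -
            have "norm (R w n y) \<le> e / D" for w using elim S_dist[OF y] less_imp_le by blast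
            then show ?thesis unfolding norm_minus_cancel D_def by (rule norm_sum_coord_scaleR_le)
          qed
          also have "\<dots> = e * norm h" using D by simp
          finally show "norm (sum (\<lambda>i. f' i y h) {..<n} - g' y h) \<le> e * norm h" .
        qed
      qed
    qed
  qed
  then obtain g where g: "\<And>y. y \<in> S \<Longrightarrow> (\<lambda>n. f n y) sums g y \<and> (g has_derivative g' y) (at y within S)"
    by blast
  have geq: "g y = series_deriv c \<beta> p0 y" if "y \<in> S" for y
    using g[OF that] expansion(1)[OF S_dist[OF that]] sums_unique2 unfolding f_def by blast
  have "(g has_derivative g' y0) (at y0)"
    using g[OF y0S] at_within_open[OF y0S] by (simp add: S_def)
  then have "(series_deriv c \<beta> p0 has_derivative g' y0) (at y0)"
    by (rule has_derivative_transform_within_open[of _ _ _ _ S]) (use geq y0S in \<open>auto simp: S_def\<close>)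
  then show ?thesis unfolding g'_def .
qed

definition partial :: "'d option \<Rightarrow> ((real^'d) \<times> real \<Rightarrow> 'b::real_normed_vector) \<Rightarrow> (real^'d) \<times> real \<Rightarrow> 'b" where
  "partial w G y = frechet_derivative G (at y) (coord_basis w)"

fun partials :: "'d option list \<Rightarrow> ((real^'d) \<times> real \<Rightarrow> 'b::real_normed_vector) \<Rightarrow> (real^'d) \<times> real \<Rightarrow> 'b" where
  "partials [] G = G"
| "partials (w # ws) G = partial w (partials ws G)"

definition smooth_partials_on :: "((real^'d) \<times> real \<Rightarrow> 'b::real_normed_vector) \<Rightarrow> ((real^'d) \<times> real) set \<Rightarrow> bool" where
  "smooth_partials_on G W \<longleftrightarrow>
     (\<forall>ws. \<forall>p\<in>W. (partials ws G has_derivative (\<lambda>h. \<Sum>v\<in>UNIV. coord v h *\<^sub>R partials (v # ws) G p)) (at p))"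

lemma smooth_partials_onD:
  "smooth_partials_on G W \<Longrightarrow> p \<in> W \<Longrightarrow>
     (partials ws G has_derivative (\<lambda>h. \<Sum>v\<in>UNIV. coord v h *\<^sub>R partials (v # ws) G p)) (at p)"
  by (simp add: smooth_partials_on_def)

lemma count_list_Cons_fun: "count_list (w # ws) = (count_list ws)(w := Suc (count_list ws w))"
  by (simp add: fun_eq_iff)

lemma partials_eq_series_deriv:
  fixes c :: "('d::finite \<Rightarrow> nat) \<times> nat \<Rightarrow> 'b::banach" and p0 :: "(real^'d) \<times> real"
  assumes sm: "(\<lambda>\<kappa>. monomial_deriv_bound (\<lambda>_. 0) r \<kappa> * norm (c \<kappa>)) summable_on UNIV"
    and r1: "0 < r1" "r1 < r"
    and G: "\<And>y. y \<in> ball p0 r1 \<Longrightarrow> G y = series_deriv c (\<lambda>_. 0) p0 y"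
  shows "y \<in> ball p0 r1 \<Longrightarrow> partials ws G y = series_deriv c (count_list ws) p0 y"
proof (induction ws arbitrary: y)
  case Nil
  then show ?case using G by (simp add: fun_eq_iff)
next
  case (Cons w ws)
  have "(partials ws G has_derivative
      (\<lambda>h. \<Sum>v\<in>UNIV. coord v h *\<^sub>R series_deriv c ((count_list ws)(v := Suc (count_list ws v))) p0 y)) (at y)"
    by (rule has_derivative_transform_within_open[OF has_derivative_series_deriv[OF sm r1 Cons.prems],
          where s = "ball p0 r1"]) (use Cons in auto)
  then have "partial w (partials ws G) y = series_deriv c ((count_list ws)(w := Suc (count_list ws w))) p0 y"
    by (simp add: partial_def frechet_derivative_at[symmetric] sum_coord_coord_basis)
  then show ?case by (simp only: partials.simps count_list_Cons_fun)
qed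

lemma smooth_partials_on_series:
  fixes c :: "('d::finite \<Rightarrow> nat) \<times> nat \<Rightarrow> 'b::banach" and p0 :: "(real^'d) \<times> real"
  assumes sm: "(\<lambda>\<kappa>. monomial_deriv_bound (\<lambda>_. 0) r \<kappa> * norm (c \<kappa>)) summable_on UNIV"
    and r1: "0 < r1" "r1 < r"
    and G: "\<And>y. y \<in> ball p0 r1 \<Longrightarrow> G y = series_deriv c (\<lambda>_. 0) p0 y"
  shows "smooth_partials_on G (ball p0 r1)"
  unfolding smooth_partials_on_def
proof (intro allI ballI)
  fix ws y assume y: "y \<in> ball p0 r1"
  have eq: "partials ws' G y' = series_deriv c (count_list ws') p0 y'" if "y' \<in> ball p0 r1" for ws' y'
    by (rule partials_eq_series_deriv[OF sm r1 G that])
  have "(series_deriv c (count_list ws) p0 has_derivative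
      (\<lambda>h. \<Sum>v\<in>UNIV. coord v h *\<^sub>R partials (v # ws) G y)) (at y)"
    using has_derivative_series_deriv[OF sm r1 y, of "count_list ws"] eq[OF y, of "_ # ws"]
    by (simp add: count_list_Cons_fun del: partials.simps)
  then show "(partials ws G has_derivative (\<lambda>h. \<Sum>v\<in>UNIV. coord v h *\<^sub>R partials (v # ws) G y)) (at y)"
    by (rule has_derivative_transform_within_open[of _ _ _ _ "ball p0 r1"]) (use y eq in auto)
qed

lemma real_analytic_local_series:
  fixes g :: "real^'d \<Rightarrow> real \<Rightarrow> real^'e"
  assumes an: "real_analytic_xt_on g U" and p: "p \<in> U"
  obtains \<rho> c where "0 < \<rho>" "(\<lambda>\<kappa>. monomial_deriv_bound (\<lambda>_. 0) \<rho> \<kappa> * norm (c \<kappa>)) summable_on UNIV"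
    "\<And>y. y \<in> ball p \<rho> \<Longrightarrow> g (fst y) (snd y) = series_deriv c (\<lambda>_. 0) p y"
proof -
  obtain x0 t0 where p0: "p = (x0, t0)" by (cases p)
  obtain r c where r: "r > 0" and c: "\<And>x t. dist (x, t) (x0, t0) < r \<Longrightarrow>
      ((\<lambda>(\<alpha>, m). ((\<Prod>i\<in>UNIV. (x$i - x0$i) ^ \<alpha> i) * (t - t0) ^ m) *\<^sub>R c \<alpha> m) has_sum g x t) UNIV \<and>
      (\<lambda>(\<alpha>, m). norm (((\<Prod>i\<in>UNIV. (x$i - x0$i) ^ \<alpha> i) * (t - t0) ^ m) *\<^sub>R c \<alpha> m)) summable_on UNIV"
    using an p unfolding real_analytic_xt_on_def p0 by fastforce
  define cc where "cc \<kappa> = c (fst \<kappa>) (snd \<kappa>)" for \<kappa>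
  text \<open>Absolute convergence at the corner \<open>(x0 + \<rho>, t0 + \<rho>)\<close> of the polydisc gives the
    majorant needed for term-by-term differentiation.\<close>
  define \<rho> where "\<rho> = r / (2 * (real CARD('d) + 1))"
  have \<rho>: "0 < \<rho>" "\<rho> \<le> r" "real CARD('d) * \<rho> + \<rho> < r"
    using r by (simp_all add: \<rho>_def field_simps add_pos_nonneg)
  define corner where "corner = ((\<chi> i. x0 $ i + \<rho>) :: real^'d, t0 + \<rho>)"
  have "dist corner (x0, t0) \<le> norm ((\<chi> i. \<rho>) :: real^'d) + \<rho>"
  proof -
    have "(\<chi> i. x0 $ i + \<rho>) - x0 = ((\<chi> i. \<rho>) :: real^'d)" by (simp add: vec_eq_iff)
    then show ?thesis using norm_Pair_le[of "(\<chi> i. \<rho>) :: real^'d" \<rho>] \<rho> by (simp add: corner_def dist_norm)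
  qed
  also have "\<dots> \<le> real CARD('d) * \<rho> + \<rho>"
    using norm_le_l1_cart[of "(\<chi> i. \<rho>) :: real^'d"] \<rho> by simp
  also have "\<dots> < r" by (rule \<rho>(3))
  finally have "(\<lambda>(\<alpha>, m). norm (((\<Prod>i\<in>UNIV. (fst corner $ i - x0 $ i) ^ \<alpha> i) * (snd corner - t0) ^ m)
      *\<^sub>R c \<alpha> m)) summable_on UNIV"
    using c[of "fst corner" "snd corner"] by simp
  moreover have "(\<lambda>(\<alpha>, m). norm (((\<Prod>i\<in>UNIV. (fst corner $ i - x0 $ i) ^ \<alpha> i) * (snd corner - t0) ^ m)
      *\<^sub>R c \<alpha> m)) = (\<lambda>\<kappa>. monomial_deriv_bound (\<lambda>_. 0) \<rho> \<kappa> * norm (cc \<kappa>))"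
    using \<rho> by (auto simp: fun_eq_iff corner_def monomial_deriv_bound_def cc_def abs_mult prod_nonneg
        prod_UNIV_option exponent_def mult.commute)
  ultimately have "(\<lambda>\<kappa>. monomial_deriv_bound (\<lambda>_. 0) \<rho> \<kappa> * norm (cc \<kappa>)) summable_on UNIV" by simp
  moreover have "g (fst y) (snd y) = series_deriv cc (\<lambda>_. 0) p y" if "y \<in> ball p \<rho>" for y
  proof -
    have "(\<lambda>(\<alpha>, m). ((\<Prod>i\<in>UNIV. (fst y $ i - x0 $ i) ^ \<alpha> i) * (snd y - t0) ^ m) *\<^sub>R c \<alpha> m)
        = (\<lambda>\<kappa>. monomial_deriv (\<lambda>_. 0) \<kappa> p y *\<^sub>R cc \<kappa>)"
      by (simp add: fun_eq_iff monomial_deriv_def cc_def p0 prod_UNIV_option exponent_def mult.commute)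
    moreover have "dist (fst y, snd y) (x0, t0) < r" using that \<rho> by (simp add: dist_commute p0)
    ultimately have "((\<lambda>\<kappa>. monomial_deriv (\<lambda>_. 0) \<kappa> p y *\<^sub>R cc \<kappa>) has_sum g (fst y) (snd y)) UNIV"
      using c[of "fst y" "snd y"] by simp
    then show ?thesis by (simp add: series_deriv_def infsumI)
  qed
  ultimately show ?thesis using that \<rho>(1) by blast
qed

lemma real_analytic_smooth_partials:
  fixes g :: "real^'d \<Rightarrow> real \<Rightarrow> real^'e"
  assumes an: "real_analytic_xt_on g U"
  shows "smooth_partials_on (\<lambda>y. g (fst y) (snd y)) U"
  unfolding smooth_partials_on_def
proof (intro allI ballI)
  fix ws p assume "p \<in> U"
  then obtain \<rho> c where \<rho>: "0 < \<rho>" and sm: "(\<lambda>\<kappa>. monomial_deriv_bound (\<lambda>_. 0) \<rho> \<kappa> * norm (c \<kappa>)) summable_on UNIV"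
    and g: "\<And>y. y \<in> ball p \<rho> \<Longrightarrow> g (fst y) (snd y) = series_deriv c (\<lambda>_. 0) p y"
    using real_analytic_local_series[OF an] by blast
  have "smooth_partials_on (\<lambda>y. g (fst y) (snd y)) (ball p (\<rho> / 2))"
    using \<rho> g by (intro smooth_partials_on_series[OF sm]) auto
  then show "(partials ws (\<lambda>y. g (fst y) (snd y)) has_derivative
      (\<lambda>h. \<Sum>v\<in>UNIV. coord v h *\<^sub>R partials (v # ws) (\<lambda>y. g (fst y) (snd y)) p)) (at p)"
    using \<rho> by (simp add: smooth_partials_on_def)
qed

section \<open>Derivatives along compositions of analytic maps\<close>

definition graph_vderiv :: "(real \<Rightarrow> real^'d) \<Rightarrow> nat \<Rightarrow> real \<Rightarrow> (real^'d) \<times> real" where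
  "graph_vderiv F q t = (vderiv_n q F t, if q = 0 then t else if q = 1 then 1 else 0)"

lemma graph_vderiv_0 [simp]: "graph_vderiv F 0 = (\<lambda>t. (F t, t))"
  by (simp add: graph_vderiv_def fun_eq_iff)

lemma has_vector_derivative_graph_vderiv:
  assumes "(vderiv_n q F has_vector_derivative vderiv_n (Suc q) F t) (at t)"
  shows "(graph_vderiv F q has_vector_derivative graph_vderiv F (Suc q) t) (at t)"
proof -
  have "((\<lambda>t::real. if q = 0 then t else if q = 1 then 1 else 0) has_vector_derivative
      (if Suc q = 1 then 1 else 0)) (at t)"
    by (cases "q = 0") (auto intro: has_vector_derivative_id has_vector_derivative_const)
  from has_vector_derivative_Pair[OF assms this] show ?thesis
    unfolding graph_vderiv_def[abs_def] by simp
qed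

text \<open>A term \<open>[(v\<^sub>1, q\<^sub>1), \<dots>, (v\<^sub>m, q\<^sub>m)]\<close> of the Faa di Bruno expansion of the derivatives of
  \<open>t \<mapsto> \<Phi> (F t, t)\<close> stands for the product of the \<open>v\<^sub>j\<close>-coordinates of the \<open>q\<^sub>j\<close>-th derivatives of
  \<open>t \<mapsto> (F t, t)\<close>, times the partial derivative \<open>\<partial>\<^sub>v\<^sub>1 \<dots> \<partial>\<^sub>v\<^sub>m \<Phi>\<close> at \<open>(F t, t)\<close>.\<close>
definition term_coeff :: "(real \<Rightarrow> real^'d) \<Rightarrow> ('d option \<times> nat) list \<Rightarrow> real \<Rightarrow> real" where
  "term_coeff F \<tau> t = prod_list (map (\<lambda>(v, q). coord v (graph_vderiv F q t)) \<tau>)"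

definition term_value :: "((real^'d) \<times> real \<Rightarrow> 'b::real_normed_vector) \<Rightarrow> (real \<Rightarrow> real^'d)
    \<Rightarrow> ('d option \<times> nat) list \<Rightarrow> real \<Rightarrow> 'b" where
  "term_value \<Phi> F \<tau> t = term_coeff F \<tau> t *\<^sub>R partials (map fst \<tau>) \<Phi> (F t, t)"

lemma term_coeff_Cons [simp]: "term_coeff F ((v, q) # \<tau>) t = coord v (graph_vderiv F q t) * term_coeff F \<tau> t"
  by (simp add: term_coeff_def)

definition raise_order :: "nat \<Rightarrow> ('d option \<times> nat) list \<Rightarrow> ('d option \<times> nat) list" where
  "raise_order j \<tau> = \<tau>[j := (fst (\<tau> ! j), Suc (snd (\<tau> ! j)))]"

lemma raise_order_simps [simp]:
  "raise_order 0 ((v, q) # \<tau>) = (v, Suc q) # \<tau>" "raise_order (Suc j) (x # \<tau>) = x # raise_order j \<tau>"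
  by (simp_all add: raise_order_def)

lemma map_fst_raise_order [simp]: "map fst (raise_order j \<tau>) = map fst \<tau>"
  by (simp add: raise_order_def map_update) (metis list_update_beyond list_update_id length_map not_le nth_map)

lemma sum_list_raise_order:
  "j < length \<tau> \<Longrightarrow> sum_list (map snd (raise_order j \<tau>)) = Suc (sum_list (map snd \<tau>))"
proof (induction \<tau> arbitrary: j)
  case (Cons x \<tau>)
  then show ?case by (cases x; cases j) auto
qed simp

lemma set_raise_order:
  "x \<in> set (raise_order j \<tau>) \<Longrightarrow> x \<in> set \<tau> \<or> (\<exists>y\<in>set \<tau>. x = (fst y, Suc (snd y)))"
  unfolding raise_order_def
  by (cases "j < length \<tau>") (auto simp: list_update_beyond dest: set_update_subset_insert[THEN subsetD])

definition coord_list :: "'d::finite option list" where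
  "coord_list = (SOME xs. distinct xs \<and> set xs = UNIV)"

lemma coord_list: "distinct (coord_list :: 'd::finite option list)" "set (coord_list :: 'd option list) = UNIV"
proof -
  have "\<exists>xs. distinct xs \<and> set xs = (UNIV :: 'd option set)"
    using finite_distinct_list[of "UNIV :: 'd option set"] by auto
  from someI_ex[OF this] show "distinct (coord_list :: 'd option list)" "set (coord_list :: 'd option list) = UNIV"
    unfolding coord_list_def by auto
qed

lemma sum_list_coord_list: "sum_list (map f coord_list) = (\<Sum>v\<in>UNIV. f v)"
  by (simp add: sum_list_distinct_conv_sum_set coord_list)

lemma length_coord_list: "length (coord_list :: 'd::finite option list) = CARD('d option)"
  by (metis distinct_card coord_list)

text \<open>The product rule: differentiating the partial derivative in a term adds a factor by the
  chain rule, differentiating its j-th factor raises the order of that factor.\<close>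
definition term_derivs :: "('d::finite option \<times> nat) list \<Rightarrow> ('d option \<times> nat) list list" where
  "term_derivs \<tau> = map (\<lambda>v. (v, 1) # \<tau>) coord_list @ map (\<lambda>j. raise_order j \<tau>) [0..<length \<tau>]"

fun fdb_terms :: "nat \<Rightarrow> ('d::finite option \<times> nat) list list" where
  "fdb_terms 0 = [[]]"
| "fdb_terms (Suc p) = concat (map term_derivs (fdb_terms p))"

lemma fdb_terms_orders:
  "\<tau> \<in> set (fdb_terms p) \<Longrightarrow> sum_list (map snd \<tau>) = p \<and> (\<forall>x\<in>set \<tau>. 1 \<le> snd x)"
proof (induction p arbitrary: \<tau>)
  case (Suc p)
  then obtain \<sigma> where \<sigma>: "\<sigma> \<in> set (fdb_terms p)" "\<tau> \<in> set (term_derivs \<sigma>)" by auto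
  then consider v where "\<tau> = (v, 1) # \<sigma>" | j where "j < length \<sigma>" "\<tau> = raise_order j \<sigma>"
    unfolding term_derivs_def by auto
  then show ?case
    using Suc.IH[OF \<sigma>(1)] sum_list_raise_order[of _ \<sigma>] by cases (auto dest!: set_raise_order)
qed simp

lemma fdb_term_order_le: "\<tau> \<in> set (fdb_terms p) \<Longrightarrow> x \<in> set \<tau> \<Longrightarrow> snd x \<le> p"
  using fdb_terms_orders[of \<tau> p] member_le_sum_list[of "snd x" "map snd \<tau>"] by auto

lemma length_fdb_term_le: "\<tau> \<in> set (fdb_terms p) \<Longrightarrow> length \<tau> \<le> p"
  using fdb_terms_orders[of \<tau> p] sum_list_mono[of \<tau> "\<lambda>_. 1" snd] by (simp add: sum_list_triv)

lemma norm_sum_list_le: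
  assumes "\<And>x. x \<in> set xs \<Longrightarrow> norm (f x) \<le> B"
  shows "norm (sum_list (map f xs)) \<le> real (length xs) * B"
  using assms
proof (induction xs)
  case (Cons x xs)
  have "norm (sum_list (map f (x # xs))) \<le> norm (f x) + norm (sum_list (map f xs))"
    by (simp add: norm_triangle_ineq)
  also have "\<dots> \<le> B + real (length xs) * B" using Cons by (intro add_mono) auto
  finally show ?case by (simp add: algebra_simps)
qed simp

lemma length_fdb_terms_le:
  "real (length (fdb_terms p :: ('d::finite option \<times> nat) list list)) \<le> (real CARD('d option) + p) ^ p"
proof (induction p)
  case (Suc p)
  define D where "D = real CARD('d option)"
  have "real (length (fdb_terms (Suc p) :: ('d option \<times> nat) list list))
      = (\<Sum>\<tau>\<leftarrow>(fdb_terms p :: ('d option \<times> nat) list list). real (length (term_derivs \<tau>)))"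
    by (simp add: length_concat o_def sum_list_of_nat[symmetric])
  also have "\<dots> \<le> norm \<dots>" by simp
  also have "\<dots> \<le> real (length (fdb_terms p :: ('d option \<times> nat) list list)) * (D + p)"
    by (rule norm_sum_list_le)
      (auto simp: term_derivs_def length_coord_list D_def dest: length_fdb_term_le)
  also have "\<dots> \<le> (D + p) ^ p * (D + p)"
    using Suc.IH by (intro mult_right_mono) (auto simp: D_def)
  also have "\<dots> \<le> (D + Suc p) ^ Suc p"
    by (simp only: power_Suc2[symmetric]) (intro power_mono, auto simp: D_def)
  finally show ?case by (simp add: D_def)
qed simp

lemma has_real_derivative_term_coeff:
  assumes "\<forall>x\<in>set \<tau>. (vderiv_n (snd x) F has_vector_derivative vderiv_n (Suc (snd x)) F t) (at t)"
  shows "(term_coeff F \<tau> has_real_derivative (\<Sum>j<length \<tau>. term_coeff F (raise_order j \<tau>) t)) (at t)"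
  using assms
proof (induction \<tau>)
  case Nil
  then show ?case by (simp add: term_coeff_def[abs_def])
next
  case (Cons x \<tau>)
  obtain v q where x: "x = (v, q)" by (cases x)
  have "(vderiv_n q F has_vector_derivative vderiv_n (Suc q) F t) (at t)" using Cons.prems x by simp
  from bounded_linear.has_vector_derivative[OF bounded_linear_coord has_vector_derivative_graph_vderiv[OF this]]
  have "((\<lambda>t. coord v (graph_vderiv F q t)) has_real_derivative coord v (graph_vderiv F (Suc q) t)) (at t)"
    by (simp only: has_real_derivative_iff_has_vector_derivative)
  from DERIV_mult'[OF this Cons.IH] Cons.prems
  have "((\<lambda>t. coord v (graph_vderiv F q t) * term_coeff F \<tau> t) has_real_derivative
      coord v (graph_vderiv F q t) * (\<Sum>j<length \<tau>. term_coeff F (raise_order j \<tau>) t)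
        + coord v (graph_vderiv F (Suc q) t) * term_coeff F \<tau> t) (at t)"
    by simp
  moreover have "(\<lambda>t. coord v (graph_vderiv F q t) * term_coeff F \<tau> t) = term_coeff F (x # \<tau>)"
    by (simp add: x fun_eq_iff)
  ultimately show ?case
    unfolding x length_Cons sum.lessThan_Suc_shift by (simp add: sum_distrib_left add.commute)
qed

lemma has_vector_derivative_partials_graph:
  assumes \<Phi>: "smooth_partials_on \<Phi> W" and W: "(F t, t) \<in> W"
    and F: "(F has_vector_derivative vderiv_n 1 F t) (at t)"
  shows "((\<lambda>t. partials ws \<Phi> (F t, t)) has_vector_derivative
           (\<Sum>v\<in>UNIV. coord v (graph_vderiv F 1 t) *\<^sub>R partials (v # ws) \<Phi> (F t, t))) (at t)"
proof -
  have "(graph_vderiv F 0 has_vector_derivative graph_vderiv F 1 t) (at t)"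
    using has_vector_derivative_graph_vderiv[of 0 F t] F by simp
  then have "((\<lambda>t. (F t, t)) has_derivative (\<lambda>h. h *\<^sub>R graph_vderiv F 1 t)) (at t)"
    by (simp add: has_vector_derivative_def)
  from has_derivative_compose[OF this smooth_partials_onD[OF \<Phi> W]] show ?thesis
    by (simp add: has_vector_derivative_def scaleR_sum_right)
qed

lemma has_vector_derivative_term_value:
  assumes \<Phi>: "smooth_partials_on \<Phi> W" and W: "(F t, t) \<in> W"
    and F: "(F has_vector_derivative vderiv_n 1 F t) (at t)"
    and F\<tau>: "\<forall>x\<in>set \<tau>. (vderiv_n (snd x) F has_vector_derivative vderiv_n (Suc (snd x)) F t) (at t)"
  shows "(term_value \<Phi> F \<tau> has_vector_derivative sum_list (map (\<lambda>\<sigma>. term_value \<Phi> F \<sigma> t) (term_derivs \<tau>))) (at t)"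
  using has_vector_derivative_scaleR[OF has_real_derivative_term_coeff[OF F\<tau>]
      has_vector_derivative_partials_graph[OF \<Phi> W F, of "map fst \<tau>"]]
  by (simp add: term_derivs_def sum_list_coord_list atLeast0LessThan[symmetric] sum_list_distinct_conv_sum_set
      term_value_def[abs_def] scaleR_sum_right scaleR_sum_left mult.commute)

lemma sum_list_concat_map: "sum_list (map g (concat xss)) = sum_list (map (\<lambda>xs. sum_list (map g xs)) xss)"
  by (induction xss) auto

lemma has_vector_derivative_sum_list:
  assumes "\<And>x. x \<in> set xs \<Longrightarrow> (f x has_vector_derivative f' x) (at t)"
  shows "((\<lambda>t. sum_list (map (\<lambda>x. f x t) xs)) has_vector_derivative sum_list (map f' xs)) (at t)"
  using assms by (induction xs) (auto intro!: has_vector_derivative_add has_vector_derivative_const)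

lemma vderiv_n_graph_comp:
  assumes \<Phi>: "smooth_partials_on \<Phi> W" and T: "open T" and W: "\<And>t. t \<in> T \<Longrightarrow> (F t, t) \<in> W"
    and F: "has_vderivs_on K F T"
  shows "\<And>p t. p \<le> Suc K \<Longrightarrow> t \<in> T \<Longrightarrow>
           vderiv_n p (\<lambda>t. \<Phi> (F t, t)) t = sum_list (map (\<lambda>\<tau>. term_value \<Phi> F \<tau> t) (fdb_terms p))"
    and "has_vderivs_on K (\<lambda>t. \<Phi> (F t, t)) T"
proof -
  have "((\<lambda>t. sum_list (map (\<lambda>\<tau>. term_value \<Phi> F \<tau> t) (fdb_terms p))) has_vector_derivative
      sum_list (map (\<lambda>\<tau>. term_value \<Phi> F \<tau> t) (fdb_terms (Suc p)))) (at t)"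
    if p: "p \<le> K" and t: "t \<in> T" for p t
  proof -
    have "((\<lambda>t. sum_list (map (\<lambda>\<tau>. term_value \<Phi> F \<tau> t) (fdb_terms p))) has_vector_derivative
        sum_list (map (\<lambda>\<tau>. sum_list (map (\<lambda>\<sigma>. term_value \<Phi> F \<sigma> t) (term_derivs \<tau>))) (fdb_terms p))) (at t)"
    proof (intro has_vector_derivative_sum_list has_vector_derivative_term_value[where F = F, OF \<Phi> W[OF t]])
      show "(F has_vector_derivative vderiv_n 1 F t) (at t)"
        using has_vderivs_onD[OF F _ t, of 0] by simp
      show "\<forall>x\<in>set \<tau>. (vderiv_n (snd x) F has_vector_derivative vderiv_n (Suc (snd x)) F t) (at t)"
        if "\<tau> \<in> set (fdb_terms p)" for \<tau>
        using fdb_term_order_le[OF that] p has_vderivs_onD[OF F _ t] by (meson order_trans)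
    qed
    then show ?thesis by (simp add: sum_list_concat_map o_def)
  qed
  note eq = vderiv_n_eq_on_open[OF T, where h = "\<lambda>t. \<Phi> (F t, t)"
      and S = "\<lambda>p t. sum_list (map (\<lambda>\<tau>. term_value \<Phi> F \<tau> t) (fdb_terms p))", OF _ this]
  show "\<And>p t. p \<le> Suc K \<Longrightarrow> t \<in> T \<Longrightarrow>
      vderiv_n p (\<lambda>t. \<Phi> (F t, t)) t = sum_list (map (\<lambda>\<tau>. term_value \<Phi> F \<tau> t) (fdb_terms p))"
    and "has_vderivs_on K (\<lambda>t. \<Phi> (F t, t)) T"
    using eq by (simp_all add: term_value_def term_coeff_def)
qed

lemma abs_term_coeff_le:
  assumes A: "0 \<le> A" and "\<And>x. x \<in> set \<tau> \<Longrightarrow> norm (graph_vderiv F (snd x) t) \<le> 2 * A ^ snd x"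
  shows "\<bar>term_coeff F \<tau> t\<bar> \<le> 2 ^ length \<tau> * A ^ sum_list (map snd \<tau>)"
  using assms(2)
proof (induction \<tau>)
  case (Cons x \<tau>)
  obtain v q where x: "x = (v, q)" by (cases x)
  have "\<bar>term_coeff F (x # \<tau>) t\<bar> = \<bar>coord v (graph_vderiv F q t)\<bar> * \<bar>term_coeff F \<tau> t\<bar>"
    by (simp add: x abs_mult)
  also have "\<dots> \<le> (2 * A ^ q) * (2 ^ length \<tau> * A ^ sum_list (map snd \<tau>))"
  proof (rule mult_mono)
    show "\<bar>coord v (graph_vderiv F q t)\<bar> \<le> 2 * A ^ q"
      using order_trans[OF abs_coord_le Cons.prems[of x]] x by simp
  qed (use Cons A in auto)
  finally show ?case by (simp add: x power_add mult_ac)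
qed (simp add: term_coeff_def)

text \<open>Each of the at most \<open>(CARD('d option) + p)\<^sup>p\<close> terms of the expansion is bounded
  by \<open>(2A)\<^sup>p M\<close>.\<close>
lemma norm_vderiv_n_graph_comp_le:
  fixes \<Phi> :: "(real^'d) \<times> real \<Rightarrow> 'b::real_normed_vector" and F :: "real \<Rightarrow> real^'d"
  assumes \<Phi>: "smooth_partials_on \<Phi> W" and T: "open T" and W: "\<And>t. t \<in> T \<Longrightarrow> (F t, t) \<in> W"
    and F: "has_vderivs_on K F T"
    and M: "\<And>ws t. length ws \<le> Suc K \<Longrightarrow> t \<in> T \<Longrightarrow> norm (partials ws \<Phi> (F t, t)) \<le> M"
    and A: "1 \<le> A" and FA: "\<And>q t. 1 \<le> q \<Longrightarrow> q \<le> Suc K \<Longrightarrow> t \<in> T \<Longrightarrow> norm (vderiv_n q F t) \<le> A ^ q"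
    and p: "p \<le> Suc K" and t: "t \<in> T"
  shows "norm (vderiv_n p (\<lambda>t. \<Phi> (F t, t)) t) \<le> (real CARD('d option) + p) ^ p * (2 ^ p * A ^ p * M)"
proof -
  have M0: "0 \<le> M" using order_trans[OF norm_ge_zero M[of "[]" t]] t by simp
  have graph: "norm (graph_vderiv F q t) \<le> 2 * A ^ q" if "1 \<le> q" "q \<le> Suc K" for q
  proof -
    have "norm (graph_vderiv F q t) \<le> norm (vderiv_n q F t) + norm (if q = 0 then t else if q = 1 then 1 else (0::real))"
      unfolding graph_vderiv_def by (rule norm_Pair_le)
    also have "\<dots> \<le> A ^ q + 1" using FA[OF that t] that by (intro add_mono) auto
    also have "\<dots> \<le> 2 * A ^ q" using one_le_power[OF A] by simp
    finally show ?thesis .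
  qed
  have "norm (term_value \<Phi> F \<tau> t) \<le> 2 ^ p * A ^ p * M" if \<tau>: "\<tau> \<in> set (fdb_terms p)" for \<tau>
  proof -
    have "norm (graph_vderiv F (snd x) t) \<le> 2 * A ^ snd x" if "x \<in> set \<tau>" for x
      using graph[of "snd x"] fdb_terms_orders[OF \<tau>] fdb_term_order_le[OF \<tau> that] p that by auto
    then have "\<bar>term_coeff F \<tau> t\<bar> \<le> 2 ^ length \<tau> * A ^ sum_list (map snd \<tau>)"
      using A by (intro abs_term_coeff_le) auto
    also have "\<dots> \<le> 2 ^ p * A ^ p"
      using fdb_terms_orders[OF \<tau>] length_fdb_term_le[OF \<tau>] A by (auto intro!: power_increasing)
    finally show ?thesis
      unfolding term_value_def using M[of "map fst \<tau>" t] length_fdb_term_le[OF \<tau>] p t M0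
      by (simp add: mult_mono)
  qed
  then have "norm (sum_list (map (\<lambda>\<tau>. term_value \<Phi> F \<tau> t) (fdb_terms p)))
      \<le> real (length (fdb_terms p :: ('d option \<times> nat) list list)) * (2 ^ p * A ^ p * M)"
    by (rule norm_sum_list_le)
  also have "\<dots> \<le> (real CARD('d option) + p) ^ p * (2 ^ p * A ^ p * M)"
    using length_fdb_terms_le[where 'd = 'd, of p] M0 A by (intro mult_right_mono) auto
  finally show ?thesis using vderiv_n_graph_comp(1)[OF \<Phi> T W F p t] by simp
qed

lemma vderiv_n_const: "vderiv_n (Suc q) (\<lambda>t. c) = (\<lambda>t. 0)"
  by (induction q) (simp_all add: fun_eq_iff vector_derivative_const_at)

lemma has_vderivs_on_const: "has_vderivs_on K (\<lambda>t. c) T"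
  unfolding has_vderivs_on_def
proof (intro allI impI ballI)
  fix q t
  show "(vderiv_n q (\<lambda>t. c) has_vector_derivative vderiv_n (Suc q) (\<lambda>t. c) t) (at t)"
    by (cases q) (simp_all only: vderiv_n.simps(1) vderiv_n_const has_vector_derivative_const)
qed

text \<open>Each letter multiplies the bound on the derivatives by R: this is where the exponential
  growth in the length of the word comes from.\<close>
lemma comp_word_vderivs:
  fixes f :: "'i \<Rightarrow> real^'d \<Rightarrow> real \<Rightarrow> real^'d"
  assumes smooth: "\<And>i. i \<in> Lam \<Longrightarrow> smooth_partials_on (\<lambda>y. f i (fst y) (snd y)) (W i)"
    and T: "open T"
    and maps: "\<And>i x t. i \<in> Lam \<Longrightarrow> x \<in> X \<Longrightarrow> t \<in> T \<Longrightarrow> (x, t) \<in> W i \<and> f i x t \<in> X"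
    and x0: "x0 \<in> X"
    and M: "\<And>i ws x t. i \<in> Lam \<Longrightarrow> length ws \<le> Suc K \<Longrightarrow> x \<in> X \<Longrightarrow> t \<in> T \<Longrightarrow>
               norm (partials ws (\<lambda>y. f i (fst y) (snd y)) (x, t)) \<le> M"
    and R: "1 \<le> R" "\<And>p. 1 \<le> p \<Longrightarrow> p \<le> Suc K \<Longrightarrow> (real CARD('d option) + p) ^ p * (2 ^ p * M) \<le> R ^ p"
  shows "w \<in> lists Lam \<Longrightarrow> (\<forall>t\<in>T. comp_word f w t x0 \<in> X) \<and> has_vderivs_on K (\<lambda>t. comp_word f w t x0) T \<and>
    (\<forall>q t. 1 \<le> q \<longrightarrow> q \<le> Suc K \<longrightarrow> t \<in> T \<longrightarrow>
       norm (vderiv_n q (\<lambda>t. comp_word f w t x0) t) \<le> (R ^ length w) ^ q)"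
proof (induction w)
  case Nil
  have "norm (vderiv_n q (\<lambda>t. x0) t) \<le> 1" if "1 \<le> q" for q t
    using that by (cases q) (simp_all only: vderiv_n_const, simp_all)
  then show ?case using x0 has_vderivs_on_const[of K x0 T] by simp
next
  case (Cons i w)
  then have i: "i \<in> Lam" and IH: "(\<forall>t\<in>T. comp_word f w t x0 \<in> X) \<and> has_vderivs_on K (\<lambda>t. comp_word f w t x0) T \<and>
    (\<forall>q t. 1 \<le> q \<longrightarrow> q \<le> Suc K \<longrightarrow> t \<in> T \<longrightarrow> norm (vderiv_n q (\<lambda>t. comp_word f w t x0) t) \<le> (R ^ length w) ^ q)"
    by auto
  define F where "F = (\<lambda>t. comp_word f w t x0)"
  define \<Phi> where "\<Phi> = (\<lambda>y. f i (fst y) (snd y))"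
  have FX: "\<And>t. t \<in> T \<Longrightarrow> F t \<in> X" and F: "has_vderivs_on K F T"
    and FR: "\<And>q t. 1 \<le> q \<Longrightarrow> q \<le> Suc K \<Longrightarrow> t \<in> T \<Longrightarrow> norm (vderiv_n q F t) \<le> (R ^ length w) ^ q"
    using IH by (simp_all add: F_def)
  have eq: "(\<lambda>t. comp_word f (i # w) t x0) = (\<lambda>t. \<Phi> (F t, t))"
    by (simp add: fun_eq_iff F_def \<Phi>_def)
  have \<Phi>: "smooth_partials_on \<Phi> (W i)" unfolding \<Phi>_def by (rule smooth[OF i])
  have FW: "\<And>t. t \<in> T \<Longrightarrow> (F t, t) \<in> W i" using maps[OF i FX] by blast
  have "norm (vderiv_n q (\<lambda>t. \<Phi> (F t, t)) t) \<le> (R ^ length (i # w)) ^ q"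
    if q: "1 \<le> q" "q \<le> Suc K" and t: "t \<in> T" for q t
  proof -
    have "norm (vderiv_n q (\<lambda>t. \<Phi> (F t, t)) t)
        \<le> (real CARD('d option) + q) ^ q * (2 ^ q * (R ^ length w) ^ q * M)"
      using M[OF i _ FX] R(1)
      by (intro norm_vderiv_n_graph_comp_le[OF \<Phi> T FW F _ _ FR q(2) t]) (simp_all add: \<Phi>_def)
    also have "\<dots> = ((real CARD('d option) + q) ^ q * (2 ^ q * M)) * (R ^ length w) ^ q"
      by (simp add: algebra_simps)
    also have "\<dots> \<le> R ^ q * (R ^ length w) ^ q"
      using R q by (intro mult_right_mono) auto
    also have "\<dots> = (R ^ length (i # w)) ^ q" by (simp add: power_mult_distrib[symmetric])
    finally show ?thesis .
  qed
  then show ?case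
    using maps[OF i FX] vderiv_n_graph_comp(2)[OF \<Phi> T FW F] unfolding eq by (simp add: F_def \<Phi>_def)
qed

lemma compact_Times_interval_thicken:
  fixes K :: "'a::heine_borel set" and a b :: real
  assumes K: "compact K" and G: "open G" and sub: "K \<times> {a..b} \<subseteq> G" and ab: "a \<le> b"
  shows "\<exists>\<eta>>0. K \<times> {a-\<eta>..b+\<eta>} \<subseteq> G"
proof (cases "K = {}")
  case False
  have "compact (K \<times> {a..b})" using K by (simp add: compact_Times)
  moreover have "K \<times> {a..b} \<noteq> {}" using False ab by auto
  ultimately obtain \<eta> where \<eta>: "\<eta> > 0" "{z. infdist z (K \<times> {a..b}) \<le> \<eta>} \<subseteq> G"
    using compact_in_open_separated[OF _ _ G sub] by blast
  have "(x, t) \<in> G" if "x \<in> K" "t \<in> {a-\<eta>..b+\<eta>}" for x t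
  proof -
    have "(x, max a (min b t)) \<in> K \<times> {a..b}" using that ab by auto
    then have "infdist (x, t) (K \<times> {a..b}) \<le> dist (x, t) (x, max a (min b t))" by (rule infdist_le)
    also have "\<dots> \<le> \<eta>" using that ab \<eta>(1) by (auto simp: dist_Pair_Pair dist_real_def max_def min_def)
    finally show ?thesis using \<eta>(2) by auto
  qed
  then show ?thesis using \<eta>(1) by blast
qed (auto intro: exI[of _ 1])

lemma bounded_finite_family_on_compact:
  assumes "finite I" "compact K" "\<And>i. i \<in> I \<Longrightarrow> continuous_on K (g i)"
  shows "\<exists>M. \<forall>i\<in>I. \<forall>y\<in>K. norm (g i y) \<le> M"
proof -
  have "bounded (\<Union>i\<in>I. g i ` K)"
    using assms by (simp add: bounded_UN compact_imp_bounded compact_continuous_image)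
  then show ?thesis unfolding bounded_iff by blast
qed

lemma exists_power_majorant:
  fixes D M :: real
  assumes D: "0 \<le> D" and M: "0 \<le> M"
  shows "\<exists>R\<ge>1. \<forall>p. 1 \<le> p \<longrightarrow> p \<le> K \<longrightarrow> (D + p) ^ p * (2 ^ p * M) \<le> R ^ p"
proof (intro exI conjI allI impI)
  define R where "R = 2 * (D + K + 1) * (M + 1)"
  have "1 * 1 \<le> 2 * (D + K + 1) * (M + 1)" using D M by (intro mult_mono) auto
  then show "1 \<le> R" by (simp add: R_def)
  fix p assume p: "1 \<le> p" "p \<le> K"
  have "(D + p) ^ p * (2 ^ p * M) = (2 * (D + p)) ^ p * M"
    by (simp only: power_mult_distrib mult.assoc mult.commute mult.left_commute)
  also have "\<dots> \<le> (2 * (D + K + 1)) ^ p * (M + 1) ^ p"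
  proof (rule mult_mono)
    show "(2 * (D + p)) ^ p \<le> (2 * (D + K + 1)) ^ p" using p D by (intro power_mono) auto
    show "M \<le> (M + 1) ^ p" using p M self_le_power[of "M + 1" p] by simp
  qed (use D M in auto)
  also have "\<dots> = R ^ p" by (simp add: R_def power_mult_distrib)
  finally show "(D + p) ^ p * (2 ^ p * M) \<le> R ^ p" .
qed

lemma continuous_family_thicken:
  fixes \<Phi> :: "'i \<Rightarrow> 'a::heine_borel \<times> real \<Rightarrow> 'b::topological_space" and a b :: real
  assumes Lam: "finite Lam" and K: "compact K" and V: "open V" and ab: "a \<le> b"
    and U: "\<And>i. i \<in> Lam \<Longrightarrow> open (U i) \<and> K \<times> {a..b} \<subseteq> U i \<and> continuous_on (U i) (\<Phi> i)"
    and maps: "\<And>i y. i \<in> Lam \<Longrightarrow> y \<in> K \<times> {a..b} \<Longrightarrow> \<Phi> i y \<in> V"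
  obtains \<eta> where "0 < \<eta>" "\<And>i y. i \<in> Lam \<Longrightarrow> y \<in> K \<times> {a-\<eta>..b+\<eta>} \<Longrightarrow> y \<in> U i \<and> \<Phi> i y \<in> V"
proof -
  define G where "G = (\<Inter>i\<in>Lam. U i \<inter> \<Phi> i -` V)"
  have "open G"
    unfolding G_def
  proof (rule open_INT[OF Lam], intro ballI)
    fix i assume "i \<in> Lam"
    then show "open (U i \<inter> \<Phi> i -` V)" using continuous_open_preimage U V by blast
  qed
  moreover have "K \<times> {a..b} \<subseteq> G" using U maps by (auto simp: G_def)
  ultimately obtain \<eta> where \<eta>: "0 < \<eta>" "K \<times> {a-\<eta>..b+\<eta>} \<subseteq> G"
    using compact_Times_interval_thicken[OF K _ _ ab] by blast
  show ?thesis
  proof (rule that[OF \<eta>(1)])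
    fix i y assume "i \<in> Lam" "y \<in> K \<times> {a-\<eta>..b+\<eta>}"
    then show "y \<in> U i \<and> \<Phi> i y \<in> V" using \<eta>(2) by (auto simp: G_def)
  qed
qed

lemma analytic_family_uniform_bounds:
  fixes f :: "'i \<Rightarrow> real^'d \<Rightarrow> real \<Rightarrow> real^'d"
  assumes ab: "a \<le> b" and V: "open V" "bounded V" and Lam: "finite Lam"
    and maps: "\<And>i x t. i \<in> Lam \<Longrightarrow> x \<in> closure V \<Longrightarrow> t \<in> {a..b} \<Longrightarrow> f i x t \<in> V"
    and analytic: "\<And>i. i \<in> Lam \<Longrightarrow> \<exists>U. open U \<and> closure V \<times> {a..b} \<subseteq> U \<and> real_analytic_xt_on (f i) U"
  obtains \<eta> U M where "0 < \<eta>" "\<And>i. i \<in> Lam \<Longrightarrow> smooth_partials_on (\<lambda>y. f i (fst y) (snd y)) (U i)"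
    "\<And>i x t. i \<in> Lam \<Longrightarrow> x \<in> closure V \<Longrightarrow> t \<in> {a-\<eta>..b+\<eta>} \<Longrightarrow> (x, t) \<in> U i \<and> f i x t \<in> V"
    "\<And>i ws x t. i \<in> Lam \<Longrightarrow> length ws \<le> K \<Longrightarrow> x \<in> closure V \<Longrightarrow> t \<in> {a-\<eta>..b+\<eta>} \<Longrightarrow>
       norm (partials ws (\<lambda>y. f i (fst y) (snd y)) (x, t)) \<le> M"
proof -
  define \<Phi> where "\<Phi> i = (\<lambda>y. f i (fst y) (snd y))" for i
  obtain U where U: "\<And>i. i \<in> Lam \<Longrightarrow> open (U i) \<and> closure V \<times> {a..b} \<subseteq> U i \<and> real_analytic_xt_on (f i) (U i)"
    using analytic by metis
  have smooth: "smooth_partials_on (\<Phi> i) (U i)" if "i \<in> Lam" for i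
    unfolding \<Phi>_def using U[OF that] by (intro real_analytic_smooth_partials) auto
  have cont: "continuous_on (U i) (partials ws (\<Phi> i))" if "i \<in> Lam" for i ws
    using smooth_partials_onD[OF smooth[OF that]] has_derivative_continuous
    by (intro continuous_at_imp_continuous_on) blast
  have Uc: "open (U i) \<and> closure V \<times> {a..b} \<subseteq> U i \<and> continuous_on (U i) (\<Phi> i)" if "i \<in> Lam" for i
    using U[OF that] cont[OF that, of "[]"] by simp
  have maps\<Phi>: "\<Phi> i y \<in> V" if "i \<in> Lam" "y \<in> closure V \<times> {a..b}" for i y
    using maps that by (auto simp: \<Phi>_def)
  obtain \<eta> where \<eta>: "0 < \<eta>"
    and into: "\<And>i y. i \<in> Lam \<Longrightarrow> y \<in> closure V \<times> {a-\<eta>..b+\<eta>} \<Longrightarrow> y \<in> U i \<and> \<Phi> i y \<in> V"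
    using continuous_family_thicken[where U = U and \<Phi> = \<Phi>, OF Lam compact_closure[THEN iffD2, OF V(2)] V(1) ab Uc maps\<Phi>] by blast
  define I where "I = Lam \<times> {ws :: 'd option list. length ws \<le> K}"
  define Z where "Z = closure V \<times> {a-\<eta>..b+\<eta>}"
  have "finite I" using finite_lists_length_le[of "UNIV :: 'd option set" K] Lam by (simp add: I_def)
  moreover have "compact Z" using V(2) by (simp add: Z_def compact_Times compact_closure)
  moreover have "continuous_on Z ((\<lambda>(i, ws). partials ws (\<Phi> i)) q)" if "q \<in> I" for q
    using that into by (auto simp: I_def Z_def intro!: continuous_on_subset[OF cont])
  ultimately obtain M where M: "\<forall>q\<in>I. \<forall>y\<in>Z. norm ((\<lambda>(i, ws). partials ws (\<Phi> i)) q y) \<le> M"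
    using bounded_finite_family_on_compact by blast
  show ?thesis
  proof (rule that[OF \<eta>])
    show "smooth_partials_on (\<lambda>y. f i (fst y) (snd y)) (U i)" if "i \<in> Lam" for i
      using smooth[OF that] by (simp add: \<Phi>_def)
    show "(x, t) \<in> U i \<and> f i x t \<in> V" if "i \<in> Lam" "x \<in> closure V" "t \<in> {a-\<eta>..b+\<eta>}" for i x t
      using into[of i "(x, t)"] that by (simp add: \<Phi>_def)
    show "norm (partials ws (\<lambda>y. f i (fst y) (snd y)) (x, t)) \<le> M"
      if "i \<in> Lam" "length ws \<le> K" "x \<in> closure V" "t \<in> {a-\<eta>..b+\<eta>}" for i ws x t
      using M that by (force simp: I_def Z_def \<Phi>_def)
  qed
qed

lemma comp_word_vderiv_bounds:
  fixes f :: "'i \<Rightarrow> real^'d \<Rightarrow> real \<Rightarrow> real^'d"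
  assumes ab: "a \<le> b" and V: "open V" "bounded V" and x0: "x0 \<in> V" and Lam: "finite Lam"
    and maps: "\<And>i x t. i \<in> Lam \<Longrightarrow> x \<in> closure V \<Longrightarrow> t \<in> {a..b} \<Longrightarrow> f i x t \<in> V"
    and analytic: "\<And>i. i \<in> Lam \<Longrightarrow> \<exists>U. open U \<and> closure V \<times> {a..b} \<subseteq> U \<and> real_analytic_xt_on (f i) U"
  obtains \<eta> R where "0 < \<eta>" "1 \<le> R"
    "\<And>w. w \<in> lists Lam \<Longrightarrow> has_vderivs_on k (\<lambda>t. comp_word f w t x0) {a-\<eta><..<b+\<eta>}"
    "\<And>w q t. w \<in> lists Lam \<Longrightarrow> 1 \<le> q \<Longrightarrow> q \<le> Suc k \<Longrightarrow> t \<in> {a-\<eta><..<b+\<eta>} \<Longrightarrow>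
       norm (vderiv_n q (\<lambda>t. comp_word f w t x0) t) \<le> (R ^ length w) ^ q"
proof -
  obtain \<eta> U M where \<eta>: "0 < \<eta>" and smooth: "\<And>i. i \<in> Lam \<Longrightarrow> smooth_partials_on (\<lambda>y. f i (fst y) (snd y)) (U i)"
    and into: "\<And>i x t. i \<in> Lam \<Longrightarrow> x \<in> closure V \<Longrightarrow> t \<in> {a-\<eta>..b+\<eta>} \<Longrightarrow> (x, t) \<in> U i \<and> f i x t \<in> V"
    and M: "\<And>i ws x t. i \<in> Lam \<Longrightarrow> length ws \<le> Suc k \<Longrightarrow> x \<in> closure V \<Longrightarrow> t \<in> {a-\<eta>..b+\<eta>} \<Longrightarrow>
       norm (partials ws (\<lambda>y. f i (fst y) (snd y)) (x, t)) \<le> M"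
    using analytic_family_uniform_bounds[where f = f and K = "Suc k", OF ab V Lam maps analytic] by blast
  obtain R where R: "1 \<le> R" "\<And>p. 1 \<le> p \<Longrightarrow> p \<le> Suc k \<Longrightarrow>
      (real CARD('d option) + p) ^ p * (2 ^ p * max 0 M) \<le> R ^ p"
    using exists_power_majorant[of "real CARD('d option)" "max 0 M" "Suc k"] by auto
  have "(\<forall>t\<in>{a-\<eta><..<b+\<eta>}. comp_word f w t x0 \<in> closure V) \<and>
      has_vderivs_on k (\<lambda>t. comp_word f w t x0) {a-\<eta><..<b+\<eta>} \<and>
      (\<forall>q t. 1 \<le> q \<longrightarrow> q \<le> Suc k \<longrightarrow> t \<in> {a-\<eta><..<b+\<eta>} \<longrightarrow>
         norm (vderiv_n q (\<lambda>t. comp_word f w t x0) t) \<le> (R ^ length w) ^ q)"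
    if "w \<in> lists Lam" for w
  proof (rule comp_word_vderivs[where W = U and M = "max 0 M", OF smooth _ _ _ _ R that])
    show "(x, t) \<in> U i \<and> f i x t \<in> closure V" if "i \<in> Lam" "x \<in> closure V" "t \<in> {a-\<eta><..<b+\<eta>}" for i x t
      using into[of i x t] that closure_subset by auto
    show "norm (partials ws (\<lambda>y. f i (fst y) (snd y)) (x, t)) \<le> max 0 M"
      if "i \<in> Lam" "length ws \<le> Suc k" "x \<in> closure V" "t \<in> {a-\<eta><..<b+\<eta>}" for i ws x t
      using M[of i ws x t] that by force
  qed (use x0 closure_subset in auto)
  then show ?thesis using that \<eta> R(1) by blast
qed

section \<open>The exceptional set\<close>

definition word_pairs :: "'i set \<Rightarrow> nat \<Rightarrow> ('i list \<times> 'i list) set" where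
  "word_pairs Lam n = {(xs, ys). xs \<in> lists Lam \<and> ys \<in> lists Lam \<and> length xs = n \<and> length ys = n
                               \<and> hd xs \<noteq> hd ys}"

lemma word_pairs_0: "word_pairs Lam 0 = {}"
  by (simp add: word_pairs_def)

lemma finite_card_word_pairs:
  assumes "finite Lam"
  shows "finite (word_pairs Lam n)" "card (word_pairs Lam n) \<le> card Lam ^ n * card Lam ^ n"
proof -
  have sub: "word_pairs Lam n \<subseteq> {xs. set xs \<subseteq> Lam \<and> length xs = n} \<times> {xs. set xs \<subseteq> Lam \<and> length xs = n}"
    by (auto simp: word_pairs_def)
  moreover have fin: "finite ({xs. set xs \<subseteq> Lam \<and> length xs = n} \<times> {xs. set xs \<subseteq> Lam \<and> length xs = n})"
    using assms by (intro finite_cartesian_product finite_lists_length_eq)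
  ultimately show "finite (word_pairs Lam n)" by (rule finite_subset)
  from card_mono[OF fin sub] show "card (word_pairs Lam n) \<le> card Lam ^ n * card Lam ^ n"
    using assms by (simp add: card_cartesian_product card_lists_length_eq)
qed

lemma exc_set_subset:
  assumes "0 < \<epsilon>"
  shows "exc_set f Lam x0 J
           \<subseteq> (\<Union>n\<in>{N<..}. \<Union>(xs, ys)\<in>word_pairs Lam n. {t\<in>J. norm (Delta f x0 xs ys t) \<le> \<epsilon> ^ n})"
proof
  fix t assume "t \<in> exc_set f Lam x0 J"
  then have "\<forall>\<epsilon>\<in>{0<..}. \<forall>N\<in>{1..}. t \<in> (\<Union>n\<in>{N<..}. \<Union>(xs, ys)\<in>word_pairs Lam n.
      {t\<in>J. norm (Delta f x0 xs ys t) \<le> \<epsilon> ^ n})"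
    unfolding exc_set_def word_pairs_def by (simp only: INT_iff)
  then have "t \<in> (\<Union>n\<in>{Suc N<..}. \<Union>(xs, ys)\<in>word_pairs Lam n. {t\<in>J. norm (Delta f x0 xs ys t) \<le> \<epsilon> ^ n})"
    using assms by simp
  then show "t \<in> (\<Union>n\<in>{N<..}. \<Union>(xs, ys)\<in>word_pairs Lam n. {t\<in>J. norm (Delta f x0 xs ys t) \<le> \<epsilon> ^ n})"
    by (metis (no_types, lifting) UN_iff greaterThan_iff Suc_lessD)
qed

lemma diam_cover_word_pair_sublevels:
  assumes Lam: "finite Lam" and A: "0 \<le> A" and \<rho>: "0 \<le> \<rho>"
    and covers: "\<And>xs ys. (xs, ys) \<in> word_pairs Lam n \<Longrightarrow>
      diam_cover {t\<in>J. norm (Delta f x0 xs ys t) \<le> \<delta>} (A * \<rho> ^ n) r"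
  shows "diam_cover (\<Union>(xs, ys)\<in>word_pairs Lam n. {t\<in>J. norm (Delta f x0 xs ys t) \<le> \<delta>})
           (A * (real (card Lam) ^ 2 * \<rho>) ^ n) r"
proof -
  have "diam_cover (\<Union>(xs, ys)\<in>word_pairs Lam n. {t\<in>J. norm (Delta f x0 xs ys t) \<le> \<delta>})
      (real (card (word_pairs Lam n)) * (A * \<rho> ^ n)) r"
    using covers by (intro diam_cover_UN[OF finite_card_word_pairs(1)[OF Lam]]) auto
  moreover have "real (card (word_pairs Lam n)) \<le> (real (card Lam) ^ 2) ^ n"
    using finite_card_word_pairs(2)[OF Lam, of n]
    by (simp add: power2_eq_square power_mult_distrib flip: of_nat_mult of_nat_power)
  then have "real (card (word_pairs Lam n)) * (A * \<rho> ^ n) \<le> A * (real (card Lam) ^ 2 * \<rho>) ^ n"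
    using A \<rho> by (simp add: power_mult_distrib mult_left_mono mult_ac)
  ultimately show ?thesis by (elim diam_cover_mono) auto
qed

text \<open>With \<open>\<epsilon> = \<tau>\<^sup>k\<close>, the level-n sublevel sets in the definition of the exceptional set are
  covered by \<open>A (|\<Lambda>|\<^sup>2 \<rho>)\<^sup>n\<close> sets of diameter \<open>K \<tau>\<^sup>n\<close>.\<close>
lemma hausdorff_dim_exc_set_eq_0_if_sublevel_covers:
  fixes f :: "'i \<Rightarrow> 'v::real_normed_vector \<Rightarrow> real \<Rightarrow> 'v"
  assumes Lam: "finite Lam" and k: "1 \<le> k" and \<delta>0: "0 < \<delta>0" and A: "0 \<le> A" and \<rho>: "0 \<le> \<rho>" and K: "0 \<le> K"
    and covers: "\<And>n xs ys \<delta>. (xs, ys) \<in> word_pairs Lam n \<Longrightarrow> 0 < \<delta> \<Longrightarrow> \<delta> \<le> \<delta>0 \<Longrightarrow>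
        diam_cover {t\<in>J. norm (Delta f x0 xs ys t) \<le> \<delta>} (A * \<rho> ^ n) (K * \<delta> powr (1 / real k))"
  shows "hausdorff_dim (exc_set f Lam x0 J) = 0"
proof (rule hausdorff_dim_eq_0_if_geometric_covers[of "min 1 \<delta>0" "real (card Lam) ^ 2 * \<rho>" K])
  fix \<tau> :: real assume \<tau>: "0 < \<tau>" "\<tau> \<le> min 1 \<delta>0"
  have "diam_cover {t\<in>J. norm (Delta f x0 xs ys t) \<le> (\<tau> ^ k) ^ n} (A * \<rho> ^ n) (K * \<tau> ^ n)"
    if "(xs, ys) \<in> word_pairs Lam n" for n xs ys
  proof -
    have "n \<noteq> 0" using that word_pairs_0 by (metis empty_iff)
    then have "(\<tau> ^ k) ^ n \<le> \<tau> ^ 1"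
      using \<tau> k by (simp only: power_mult[symmetric]) (intro power_decreasing, auto)
    moreover have "((\<tau> ^ k) ^ n) powr (1 / real k) = \<tau> ^ n"
      using \<tau> k by (simp add: power_mult[symmetric] mult.commute[of k] power_mult powr_realpow[symmetric] powr_powr)
    ultimately show ?thesis using covers[OF that, of "(\<tau> ^ k) ^ n"] \<tau> by simp
  qed
  then have "diam_cover (\<Union>(xs, ys)\<in>word_pairs Lam n. {t\<in>J. norm (Delta f x0 xs ys t) \<le> (\<tau> ^ k) ^ n})
      (A * (real (card Lam) ^ 2 * \<rho>) ^ n) (K * \<tau> ^ n)" for n
    by (intro diam_cover_word_pair_sublevels[OF Lam A \<rho>])
  moreover have "exc_set f Lam x0 J
      \<subseteq> (\<Union>n\<in>{N<..}. \<Union>(xs, ys)\<in>word_pairs Lam n. {t\<in>J. norm (Delta f x0 xs ys t) \<le> (\<tau> ^ k) ^ n})" for N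
    using \<tau> by (intro exc_set_subset) simp
  ultimately show "\<exists>S. (\<forall>N. exc_set f Lam x0 J \<subseteq> (\<Union>n\<in>{N<..}. S n)) \<and>
      (\<forall>n. diam_cover (S n) (A * (real (card Lam) ^ 2 * \<rho>) ^ n) (K * \<tau> ^ n))"
    by blast
qed (use \<delta>0 \<rho> K in auto)

theorem lemma2p13:
  fixes f :: "'i \<Rightarrow> real^'d \<Rightarrow> real \<Rightarrow> real^'d"
    and Lam :: "'i set" and V :: "(real^'d) set" and a b :: real and x0 :: "real^'d"
    and C \<gamma> :: real and k :: nat
  assumes J: "a \<le> b"
    and V: "open V" "bounded V"
    and x0: "x0 \<in> V"
    and Lam: "finite Lam"
    and maps: "\<And>i x t. i \<in> Lam \<Longrightarrow> x \<in> closure V \<Longrightarrow> t \<in> {a..b} \<Longrightarrow> f i x t \<in> V"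
    and analytic: "\<And>i. i \<in> Lam \<Longrightarrow> \<exists>U. open U \<and> closure V \<times> {a..b} \<subseteq> U \<and> real_analytic_xt_on (f i) U"
    and C: "C > 0" and \<gamma>: "0 < \<gamma>" "\<gamma> < 1"
    and contr: "\<And>n is x t D. n \<ge> 1 \<Longrightarrow> is \<in> lists Lam \<Longrightarrow> length is = n \<Longrightarrow> x \<in> closure V
                 \<Longrightarrow> t \<in> {a..b} \<Longrightarrow> (comp_word f is t has_derivative D) (at x)
                 \<Longrightarrow> onorm D \<le> C * \<gamma> ^ n"
    and k: "k \<ge> 1"
    and transverse: "transverse_of_order f Lam x0 {a..b} k"
  shows "hausdorff_dim (exc_set f Lam x0 {a..b}) = 0"
proof -
  obtain \<eta> R where \<eta>: "0 < \<eta>" and R: "1 \<le> R"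
    and smooth: "\<And>w. w \<in> lists Lam \<Longrightarrow> has_vderivs_on k (\<lambda>t. comp_word f w t x0) {a-\<eta><..<b+\<eta>}"
    and bounds: "\<And>w q t. w \<in> lists Lam \<Longrightarrow> 1 \<le> q \<Longrightarrow> q \<le> Suc k \<Longrightarrow> t \<in> {a-\<eta><..<b+\<eta>} \<Longrightarrow>
        norm (vderiv_n q (\<lambda>t. comp_word f w t x0) t) \<le> (R ^ length w) ^ q"
    using comp_word_vderiv_bounds[where f = f and k = k, OF J V x0 Lam maps analytic] by blast
  obtain c where c: "0 < c" and transverse_c: "\<And>n xs ys t. (xs, ys) \<in> word_pairs Lam n \<Longrightarrow> t \<in> {a..b} \<Longrightarrow>
      \<exists>p\<le>k. c < norm (vderiv_n p (Delta f x0 xs ys) t)"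
    using transverse unfolding transverse_of_order_def word_pairs_def by fast
  have constants: "0 < c / 2" "0 \<le> ((b - a) * 4 / c + 1) * 3 ^ k" "0 \<le> R ^ Suc k" "0 \<le> 2 * (2 / c) powr (1 / real k)"
    using c J R by simp_all
  show ?thesis
  proof (rule hausdorff_dim_exc_set_eq_0_if_sublevel_covers[OF Lam k constants])
    fix n xs ys \<delta> assume pair: "(xs, ys) \<in> word_pairs Lam n" and \<delta>: "0 < \<delta>" "\<delta> \<le> c / 2"
    then have words: "xs \<in> lists Lam" "ys \<in> lists Lam" "length xs = n" "length ys = n"
      by (auto simp: word_pairs_def)
    have "diam_cover {t\<in>{a..b}. norm (comp_word f xs t x0 - comp_word f ys t x0) \<le> \<delta>}
        (((b - a) * 4 / c + 1) * 3 ^ k * (R ^ n) ^ Suc k) (2 * (2 / c) powr (1 / real k) * \<delta> powr (1 / real k))"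
    proof (rule diam_cover_sublevel_diff[OF J _ _ smooth[OF words(1)] _ smooth[OF words(2)] _ _ c _ \<delta>])
      show "\<exists>p\<le>k. c < norm (vderiv_n p (\<lambda>t. comp_word f xs t x0 - comp_word f ys t x0) t)"
        if "t \<in> {a..b}" for t
        using transverse_c[OF pair that] by (simp add: Delta_def[abs_def])
    qed (use bounds[OF words(1)] bounds[OF words(2)] words(3,4) \<eta> R in auto)
    then show "diam_cover {t\<in>{a..b}. norm (Delta f x0 xs ys t) \<le> \<delta>}
        (((b - a) * 4 / c + 1) * 3 ^ k * (R ^ Suc k) ^ n) (2 * (2 / c) powr (1 / real k) * \<delta> powr (1 / real k))"
      unfolding Delta_def power_mult[symmetric] mult.commute[of n] .
  qed
qed

end
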